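(* Let $\mathcal{I}$ be an interval hypergraph on $[n]$ containing all singletons. Then $P_{\mathcal{I}}$ is a distributive lattice if and only if $P_{\mathcal{I}}$ is isomorphic to a Cartesian product of chains.
   Context: An interval hypergraph on $[n]$ is a collection of intervals of $[n]$, by convention containing all singletons. An orientation is a map $O:\mathcal{I}\to[n]$ with $O(I)\in I$; it is acyclic if there are no $H_1,\dots,H_k$, $k\ge2$, with $O(H_{i+1})\in H_i\setminus\{O(H_i)\}$ for $i\in[k-1]$ and $O(H_1)\in H_k\setminus\{O(H_k)\}$. Orientations $O\ne O'$ are related by an increasing flip (from $O$ to $O'$) if there exist $1\le i<j\le n$ such that for all $H$: if $O(H)\ne O'(H)$ then $O(H)=i$, $O'(H)=j$; and if $\{i,j\}\subseteq H$ then $O(H)=i\iff O'(H)=j$. $P_{\mathcal{I}}$ is the transitive closure of the increasing flip relation on the acyclic orientations of $\mathcal{I}$. *)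

theory Defs
  imports Main "HOL-Library.FuncSet"
begin

definition interval_hypergraph :: "nat \<Rightarrow> nat set set \<Rightarrow> bool" where
  "interval_hypergraph n I \<longleftrightarrow>
     (\<forall>H\<in>I. \<exists>a b. 1 \<le> a \<and> a \<le> b \<and> b \<le> n \<and> H = {a..b}) \<and>
     (\<forall>i\<in>{1..n}. {i} \<in> I)"

text \<open>Orientations: maps Or with Or H \<in> H for H \<in> I; outside I they are fixed
  to undefined so that an orientation is determined by its values on I.\<close>
definition orientation :: "nat set set \<Rightarrow> (nat set \<Rightarrow> nat) \<Rightarrow> bool" where
  "orientation I Or \<longleftrightarrow> (\<forall>H\<in>I. Or H \<in> H) \<and> (\<forall>H. H \<notin> I \<longrightarrow> Or H = undefined)"

definition acyclic_orientation :: "nat set set \<Rightarrow> (nat set \<Rightarrow> nat) \<Rightarrow> bool" where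
  "acyclic_orientation I Or \<longleftrightarrow> orientation I Or \<and>
     \<not> (\<exists>(k::nat) (Hs :: nat \<Rightarrow> nat set). k \<ge> 2 \<and> (\<forall>i\<in>{1..k}. Hs i \<in> I) \<and>
          (\<forall>i\<in>{1..k-1}. Or (Hs (i+1)) \<in> Hs i - {Or (Hs i)}) \<and>
          Or (Hs 1) \<in> Hs k - {Or (Hs k)})"

definition increasing_flip ::
  "nat \<Rightarrow> nat set set \<Rightarrow> (nat set \<Rightarrow> nat) \<Rightarrow> (nat set \<Rightarrow> nat) \<Rightarrow> bool" where
  "increasing_flip n I Or Q \<longleftrightarrow> Or \<noteq> Q \<and>
     (\<exists>i j. 1 \<le> i \<and> i < j \<and> j \<le> n \<and>
       (\<forall>H\<in>I. (Or H \<noteq> Q H \<longrightarrow> Or H = i \<and> Q H = j) \<and>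
               ({i, j} \<subseteq> H \<longrightarrow> (Or H = i \<longleftrightarrow> Q H = j))))"

definition P_carrier :: "nat set set \<Rightarrow> (nat set \<Rightarrow> nat) set" where
  "P_carrier I = {Or. acyclic_orientation I Or}"

definition flip_rel :: "nat \<Rightarrow> nat set set \<Rightarrow> ((nat set \<Rightarrow> nat) \<times> (nat set \<Rightarrow> nat)) set" where
  "flip_rel n I = {(Or, Q). acyclic_orientation I Or \<and> acyclic_orientation I Q \<and>
                            increasing_flip n I Or Q}"

definition P_le :: "nat \<Rightarrow> nat set set \<Rightarrow> (nat set \<Rightarrow> nat) \<Rightarrow> (nat set \<Rightarrow> nat) \<Rightarrow> bool" where
  "P_le n I Or Q \<longleftrightarrow> Or \<in> P_carrier I \<and> Q \<in> P_carrier I \<and> (Or, Q) \<in> (flip_rel n I)\<^sup>*"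

definition partial_order_on' :: "'a set \<Rightarrow> ('a \<Rightarrow> 'a \<Rightarrow> bool) \<Rightarrow> bool" where
  "partial_order_on' A le \<longleftrightarrow>
     (\<forall>x\<in>A. le x x) \<and>
     (\<forall>x\<in>A. \<forall>y\<in>A. le x y \<and> le y x \<longrightarrow> x = y) \<and>
     (\<forall>x\<in>A. \<forall>y\<in>A. \<forall>z\<in>A. le x y \<and> le y z \<longrightarrow> le x z)"

definition chain_on :: "'a set \<Rightarrow> ('a \<Rightarrow> 'a \<Rightarrow> bool) \<Rightarrow> bool" where
  "chain_on A le \<longleftrightarrow> partial_order_on' A le \<and> (\<forall>x\<in>A. \<forall>y\<in>A. le x y \<or> le y x)"

definition is_lub :: "'a set \<Rightarrow> ('a \<Rightarrow> 'a \<Rightarrow> bool) \<Rightarrow> 'a \<Rightarrow> 'a \<Rightarrow> 'a \<Rightarrow> bool" where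
  "is_lub A le x y s \<longleftrightarrow> s \<in> A \<and> le x s \<and> le y s \<and>
     (\<forall>u\<in>A. le x u \<and> le y u \<longrightarrow> le s u)"

definition is_glb :: "'a set \<Rightarrow> ('a \<Rightarrow> 'a \<Rightarrow> bool) \<Rightarrow> 'a \<Rightarrow> 'a \<Rightarrow> 'a \<Rightarrow> bool" where
  "is_glb A le x y m \<longleftrightarrow> m \<in> A \<and> le m x \<and> le m y \<and>
     (\<forall>u\<in>A. le u x \<and> le u y \<longrightarrow> le u m)"

definition lattice_on :: "'a set \<Rightarrow> ('a \<Rightarrow> 'a \<Rightarrow> bool) \<Rightarrow> bool" where
  "lattice_on A le \<longleftrightarrow> partial_order_on' A le \<and>
     (\<forall>x\<in>A. \<forall>y\<in>A. (\<exists>s. is_lub A le x y s) \<and> (\<exists>m. is_glb A le x y m))"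

definition join_on :: "'a set \<Rightarrow> ('a \<Rightarrow> 'a \<Rightarrow> bool) \<Rightarrow> 'a \<Rightarrow> 'a \<Rightarrow> 'a" where
  "join_on A le x y = (THE s. is_lub A le x y s)"

definition meet_on :: "'a set \<Rightarrow> ('a \<Rightarrow> 'a \<Rightarrow> bool) \<Rightarrow> 'a \<Rightarrow> 'a \<Rightarrow> 'a" where
  "meet_on A le x y = (THE m. is_glb A le x y m)"

definition distributive_lattice_on :: "'a set \<Rightarrow> ('a \<Rightarrow> 'a \<Rightarrow> bool) \<Rightarrow> bool" where
  "distributive_lattice_on A le \<longleftrightarrow> lattice_on A le \<and>
     (\<forall>x\<in>A. \<forall>y\<in>A. \<forall>z\<in>A.
        meet_on A le x (join_on A le y z) =
        join_on A le (meet_on A le x y) (meet_on A le x z))"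

definition iso_product_of_chains :: "'a set \<Rightarrow> ('a \<Rightarrow> 'a \<Rightarrow> bool) \<Rightarrow> bool" where
  "iso_product_of_chains A le \<longleftrightarrow>
     (\<exists>(J :: nat set) (C :: nat \<Rightarrow> nat set) (R :: nat \<Rightarrow> nat \<Rightarrow> nat \<Rightarrow> bool) f.
        finite J \<and> (\<forall>j\<in>J. chain_on (C j) (R j)) \<and>
        bij_betw f A (Pi\<^sub>E J C) \<and>
        (\<forall>x\<in>A. \<forall>y\<in>A. le x y \<longleftrightarrow> (\<forall>j\<in>J. R j (f x j) (f y j))))"

end

theory Submission
  imports Defs
begin

lemma is_glb_iff_is_lub_dual: "is_glb A le x y m \<longleftrightarrow> is_lub A (\<lambda>a b. le b a) x y m"
  unfolding is_glb_def is_lub_def by blast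

lemma meet_on_eq_join_on_dual: "meet_on A le = join_on A (\<lambda>a b. le b a)"
  unfolding meet_on_def join_on_def is_glb_iff_is_lub_dual by blast

lemma partial_order_on'_dual: "partial_order_on' A le \<Longrightarrow> partial_order_on' A (\<lambda>a b. le b a)"
  unfolding partial_order_on'_def by blast

lemma lattice_on_dual: "lattice_on A le \<Longrightarrow> lattice_on A (\<lambda>a b. le b a)"
  unfolding lattice_on_def is_glb_iff_is_lub_dual using partial_order_on'_dual by auto

lemma join_on_eqI:
  assumes "partial_order_on' A le" "is_lub A le x y s"
  shows "join_on A le x y = s"
  unfolding join_on_def
proof (rule the_equality)
  fix t assume "is_lub A le x y t"
  with assms show "t = s" unfolding is_lub_def partial_order_on'_def by blast
qed fact

lemma meet_on_eqI: "partial_order_on' A le \<Longrightarrow> is_glb A le x y m \<Longrightarrow> meet_on A le x y = m"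
  unfolding meet_on_eq_join_on_dual is_glb_iff_is_lub_dual
  by (rule join_on_eqI[OF partial_order_on'_dual])

lemma lattice_on_is_lub_join_on:
  assumes "lattice_on A le" "x \<in> A" "y \<in> A"
  shows "is_lub A le x y (join_on A le x y)"
proof -
  obtain s where "is_lub A le x y s" using assms unfolding lattice_on_def by blast
  moreover have "partial_order_on' A le" using assms(1) unfolding lattice_on_def by blast
  ultimately show ?thesis using join_on_eqI by metis
qed

lemma lattice_on_is_glb_meet_on:
  "lattice_on A le \<Longrightarrow> x \<in> A \<Longrightarrow> y \<in> A \<Longrightarrow> is_glb A le x y (meet_on A le x y)"
  unfolding meet_on_eq_join_on_dual is_glb_iff_is_lub_dual
  by (rule lattice_on_is_lub_join_on[OF lattice_on_dual])

lemma chain_on_dual: "chain_on C R \<Longrightarrow> chain_on C (\<lambda>a b. R b a)"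
  unfolding chain_on_def using partial_order_on'_dual by blast

lemma chain_on_is_lub:
  assumes "chain_on C R" "a \<in> C" "b \<in> C"
  shows "is_lub C R a b (if R a b then b else a)"
proof -
  have refl: "R a a" "R b b" and total: "R a b \<or> R b a"
    using assms unfolding chain_on_def partial_order_on'_def by blast+
  show ?thesis
    unfolding is_lub_def using assms(2,3) refl total by auto
qed

lemma chain_on_lattice_on:
  assumes "chain_on C R"
  shows "lattice_on C R"
  unfolding lattice_on_def is_glb_iff_is_lub_dual
proof (intro conjI ballI)
  show "partial_order_on' C R" using assms unfolding chain_on_def by blast
  fix a b assume "a \<in> C" "b \<in> C"
  show "\<exists>s. is_lub C R a b s" using chain_on_is_lub[OF assms \<open>a \<in> C\<close> \<open>b \<in> C\<close>] ..
  show "\<exists>m. is_lub C (\<lambda>x y. R y x) a b m"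
    using chain_on_is_lub[OF chain_on_dual[OF assms] \<open>a \<in> C\<close> \<open>b \<in> C\<close>] ..
qed

lemma chain_on_join_on:
  assumes "chain_on C R" "a \<in> C" "b \<in> C"
  shows "join_on C R a b = (if R a b then b else a)"
  using assms(1) chain_on_is_lub[OF assms] unfolding chain_on_def by (blast intro: join_on_eqI)

lemma chain_on_meet_on: "chain_on C R \<Longrightarrow> a \<in> C \<Longrightarrow> b \<in> C \<Longrightarrow> meet_on C R a b = (if R b a then b else a)"
  unfolding meet_on_eq_join_on_dual by (rule chain_on_join_on[OF chain_on_dual])

lemma chain_on_distributive:
  assumes ch: "chain_on C R"
  shows "distributive_lattice_on C R"
  unfolding distributive_lattice_on_def
proof (intro conjI ballI chain_on_lattice_on[OF ch])
  fix a b c assume abc: "a \<in> C" "b \<in> C" "c \<in> C"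
  have total: "R x y \<or> R y x" and antisym: "R x y \<Longrightarrow> R y x \<Longrightarrow> x = y"
    if "x \<in> {a, b, c}" "y \<in> {a, b, c}" for x y
    using ch abc that unfolding chain_on_def partial_order_on'_def by blast+
  have trans: "R x y \<Longrightarrow> R y z \<Longrightarrow> R x z" if "x \<in> {a, b, c}" "y \<in> {a, b, c}" "z \<in> {a, b, c}" for x y z
    using ch abc that unfolding chain_on_def partial_order_on'_def by blast
  have "join_on C R b c \<in> C" "meet_on C R a b \<in> C" "meet_on C R a c \<in> C"
    using abc by (simp_all add: chain_on_join_on chain_on_meet_on ch)
  then show "meet_on C R a (join_on C R b c) = join_on C R (meet_on C R a b) (meet_on C R a c)"
    using abc
    by (simp add: chain_on_join_on chain_on_meet_on ch)
      (cases "R a b"; cases "R b a"; cases "R b c"; cases "R c b"; cases "R a c"; cases "R c a";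
        simp; metis insert_iff total antisym trans)
qed

lemma chain_on_linorder: "chain_on (S :: 'a :: linorder set) (\<le>)"
  unfolding chain_on_def partial_order_on'_def by auto

locale lattice_product_iso =
  fixes A :: "'a set" and le :: "'a \<Rightarrow> 'a \<Rightarrow> bool"
    and J :: "'j set" and C :: "'j \<Rightarrow> 'c set" and R :: "'j \<Rightarrow> 'c \<Rightarrow> 'c \<Rightarrow> bool"
    and f :: "'a \<Rightarrow> 'j \<Rightarrow> 'c"
  assumes lattice_factor: "j \<in> J \<Longrightarrow> lattice_on (C j) (R j)"
    and bij: "bij_betw f A (Pi\<^sub>E J C)"
    and le_iff: "x \<in> A \<Longrightarrow> y \<in> A \<Longrightarrow> le x y \<longleftrightarrow> (\<forall>j\<in>J. R j (f x j) (f y j))"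
begin

lemma component_mem: "x \<in> A \<Longrightarrow> j \<in> J \<Longrightarrow> f x j \<in> C j"
  using bij_betwE[OF bij] by blast

lemma eq_iff_components:
  assumes "x \<in> A" "y \<in> A"
  shows "x = y \<longleftrightarrow> (\<forall>j\<in>J. f x j = f y j)"
proof
  assume "\<forall>j\<in>J. f x j = f y j"
  then have "f x = f y" using assms bij_betwE[OF bij] by (blast intro: PiE_ext)
  then show "x = y" using assms bij_betw_imp_inj_on[OF bij] by (blast dest: inj_onD)
qed simp

lemma partial_order: "partial_order_on' A le"
proof -
  have po: "partial_order_on' (C j) (R j)" if "j \<in> J" for j
    using lattice_factor[OF that] unfolding lattice_on_def by blast
  show ?thesis
    unfolding partial_order_on'_def
  proof (intro conjI ballI impI)
    fix x assume x: "x \<in> A"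
    show "le x x" unfolding le_iff[OF x x] using po component_mem[OF x]
      unfolding partial_order_on'_def by blast
  next
    fix x y assume x: "x \<in> A" and y: "y \<in> A" and "le x y \<and> le y x"
    then have "R j (f x j) (f y j)" "R j (f y j) (f x j)" if "j \<in> J" for j
      using le_iff that by blast+
    then have "f x j = f y j" if "j \<in> J" for j
      using po[OF that] component_mem[OF x that] component_mem[OF y that] that
      unfolding partial_order_on'_def by blast
    then show "x = y" using eq_iff_components[OF x y] by blast
  next
    fix x y z assume x: "x \<in> A" and y: "y \<in> A" and z: "z \<in> A" and "le x y \<and> le y z"
    then have "R j (f x j) (f y j)" "R j (f y j) (f z j)" if "j \<in> J" for j
      using le_iff that by blast+
    then have "R j (f x j) (f z j)" if "j \<in> J" for j
      using po[OF that] component_mem[OF x that] component_mem[OF y that] component_mem[OF z that] that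
      unfolding partial_order_on'_def by blast
    then show "le x z" using le_iff[OF x z] by blast
  qed
qed

lemma is_lub_components:
  assumes x: "x \<in> A" and y: "y \<in> A"
  obtains s where "s \<in> A" "is_lub A le x y s"
    "\<And>j. j \<in> J \<Longrightarrow> f s j = join_on (C j) (R j) (f x j) (f y j)"
proof -
  let ?join = "\<lambda>j. join_on (C j) (R j) (f x j) (f y j)"
  have lub: "is_lub (C j) (R j) (f x j) (f y j) (?join j)" if "j \<in> J" for j
    by (rule lattice_on_is_lub_join_on[OF lattice_factor component_mem component_mem])
      (use that x y in simp_all)
  then have "(\<lambda>j\<in>J. ?join j) \<in> Pi\<^sub>E J C"
    unfolding restrict_PiE_iff is_lub_def by blast
  then have "(\<lambda>j\<in>J. ?join j) \<in> f ` A" using bij_betw_imp_surj_on[OF bij] by simp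
  then obtain s where s: "(\<lambda>j\<in>J. ?join j) = f s" "s \<in> A" by (rule imageE)
  have fs: "f s j = ?join j" if "j \<in> J" for j using that by (simp flip: s(1))
  have "is_lub A le x y s"
    unfolding is_lub_def
  proof (intro conjI ballI impI)
    show "le x s" unfolding le_iff[OF x s(2)] using lub fs unfolding is_lub_def by simp
    show "le y s" unfolding le_iff[OF y s(2)] using lub fs unfolding is_lub_def by simp
    fix u assume u: "u \<in> A" "le x u \<and> le y u"
    have "R j (?join j) (f u j)" if "j \<in> J" for j
      using lub[OF that] u le_iff[OF x u(1)] le_iff[OF y u(1)] component_mem[OF u(1) that] that
      unfolding is_lub_def by blast
    then show "le s u" unfolding le_iff[OF s(2) u(1)] using fs by simp
  qed fact
  then show ?thesis using that s(2) fs by blast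
qed

lemma join_on_components:
  assumes "x \<in> A" "y \<in> A"
  shows "join_on A le x y \<in> A"
    and "j \<in> J \<Longrightarrow> f (join_on A le x y) j = join_on (C j) (R j) (f x j) (f y j)"
  using is_lub_components[OF assms] join_on_eqI[OF partial_order] by metis+

end

sublocale lattice_product_iso \<subseteq> dual: lattice_product_iso A "\<lambda>x y. le y x" J C "\<lambda>j a b. R j b a" f
  using lattice_factor lattice_on_dual bij le_iff by unfold_locales auto

context lattice_product_iso
begin

lemma meet_on_components:
  assumes "x \<in> A" "y \<in> A"
  shows "meet_on A le x y \<in> A"
    and "j \<in> J \<Longrightarrow> f (meet_on A le x y) j = meet_on (C j) (R j) (f x j) (f y j)"
  unfolding meet_on_eq_join_on_dual using dual.join_on_components[OF assms] by blast+

lemma lattice: "lattice_on A le"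
  unfolding lattice_on_def is_glb_iff_is_lub_dual
proof (intro conjI ballI partial_order)
  fix x y assume "x \<in> A" "y \<in> A"
  show "\<exists>s. is_lub A le x y s" by (rule is_lub_components[OF \<open>x \<in> A\<close> \<open>y \<in> A\<close>]) blast
  show "\<exists>m. is_lub A (\<lambda>x y. le y x) x y m"
    by (rule dual.is_lub_components[OF \<open>x \<in> A\<close> \<open>y \<in> A\<close>]) blast
qed

lemma distributive:
  assumes "\<And>j. j \<in> J \<Longrightarrow> distributive_lattice_on (C j) (R j)"
  shows "distributive_lattice_on A le"
  unfolding distributive_lattice_on_def
proof (intro conjI ballI lattice)
  fix x y z assume xyz: "x \<in> A" "y \<in> A" "z \<in> A"
  have yz: "join_on A le y z \<in> A" and xy: "meet_on A le x y \<in> A" and xz: "meet_on A le x z \<in> A"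
    using join_on_components(1) meet_on_components(1) xyz by blast+
  have "f (meet_on A le x (join_on A le y z)) j = f (join_on A le (meet_on A le x y) (meet_on A le x z)) j"
    if "j \<in> J" for j
    using assms[OF that] component_mem[OF _ that] xyz yz xy xz that
    by (simp add: join_on_components meet_on_components distributive_lattice_on_def)
  then show "meet_on A le x (join_on A le y z) = join_on A le (meet_on A le x y) (meet_on A le x z)"
    using eq_iff_components[OF meet_on_components(1)[OF xyz(1) yz] join_on_components(1)[OF xy xz]]
    by blast
qed

end

lemma iso_product_of_chains_imp_distributive:
  assumes "iso_product_of_chains A le"
  shows "distributive_lattice_on A le"
proof -
  obtain J :: "nat set" and C :: "nat \<Rightarrow> nat set" and R :: "nat \<Rightarrow> nat \<Rightarrow> nat \<Rightarrow> bool"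
    and f :: "'a \<Rightarrow> nat \<Rightarrow> nat" where ch: "\<forall>j\<in>J. chain_on (C j) (R j)"
    and bij: "bij_betw f A (Pi\<^sub>E J C)"
    and le_iff: "\<forall>x\<in>A. \<forall>y\<in>A. le x y \<longleftrightarrow> (\<forall>j\<in>J. R j (f x j) (f y j))"
    using assms unfolding iso_product_of_chains_def by blast
  interpret lattice_product_iso A le J C R f
  proof
    show "lattice_on (C j) (R j)" if "j \<in> J" for j using ch that chain_on_lattice_on by blast
  qed (use bij le_iff in simp_all)
  show ?thesis using ch chain_on_distributive by (intro distributive) blast
qed

lemma bij_betw_PiE_reindex:
  assumes h: "bij_betw h K J"
  shows "bij_betw (\<lambda>u. \<lambda>k\<in>K. u (h k)) (Pi\<^sub>E J C) (Pi\<^sub>E K (C \<circ> h))"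
proof (rule bij_betwI')
  have h_surj: "h ` K = J" using bij_betw_imp_surj_on[OF h] .
  fix u v assume u: "u \<in> Pi\<^sub>E J C" and v: "v \<in> Pi\<^sub>E J C"
  show "(\<lambda>k\<in>K. u (h k)) = (\<lambda>k\<in>K. v (h k)) \<longleftrightarrow> u = v"
  proof
    assume eq: "(\<lambda>k\<in>K. u (h k)) = (\<lambda>k\<in>K. v (h k))"
    have "u j = v j" if "j \<in> J" for j
    proof -
      obtain k where "k \<in> K" "j = h k" using \<open>j \<in> J\<close> h_surj by blast
      then show ?thesis using fun_cong[OF eq, of k] by simp
    qed
    then show "u = v" using u v by (rule PiE_ext[rotated 2])
  qed simp
next
  fix u assume "u \<in> Pi\<^sub>E J C"
  then show "(\<lambda>k\<in>K. u (h k)) \<in> Pi\<^sub>E K (C \<circ> h)" using bij_betwE[OF h] by auto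
next
  fix w assume w: "w \<in> Pi\<^sub>E K (C \<circ> h)"
  define u where "u = (\<lambda>j\<in>J. w (inv_into K h j))"
  have inv: "inv_into K h j \<in> K" "h (inv_into K h j) = j" if "j \<in> J" for j
    using inv_into_into[of j h K] f_inv_into_f[of j h K] that bij_betw_imp_surj_on[OF h] by simp_all
  have "w (inv_into K h j) \<in> C j" if "j \<in> J" for j
    using PiE_mem[OF w inv(1)[OF that]] inv(2)[OF that] by simp
  then have "u \<in> Pi\<^sub>E J C" unfolding u_def by simp
  moreover have "w = (\<lambda>k\<in>K. u (h k))"
  proof
    fix k show "w k = (\<lambda>k\<in>K. u (h k)) k"
    proof (cases "k \<in> K")
      case True
      then show ?thesis
        unfolding u_def using bij_betw_inv_into_left[OF h True] bij_betwE[OF h] by simp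
    qed (simp add: PiE_arb[OF w])
  qed
  ultimately show "\<exists>u\<in>Pi\<^sub>E J C. w = (\<lambda>k\<in>K. u (h k))" by blast
qed

lemma iso_product_of_chainsI:
  fixes J :: "'j set" and C :: "'j \<Rightarrow> nat set" and R :: "'j \<Rightarrow> nat \<Rightarrow> nat \<Rightarrow> bool"
    and f :: "'a \<Rightarrow> 'j \<Rightarrow> nat"
  assumes "finite J" and chain: "\<And>j. j \<in> J \<Longrightarrow> chain_on (C j) (R j)"
    and bij: "bij_betw f A (Pi\<^sub>E J C)"
    and le_iff: "\<And>x y. x \<in> A \<Longrightarrow> y \<in> A \<Longrightarrow> le x y \<longleftrightarrow> (\<forall>j\<in>J. R j (f x j) (f y j))"
  shows "iso_product_of_chains A le"
proof -
  let ?K = "{0..<card J}"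
  obtain h where h: "bij_betw h ?K J" using ex_bij_betw_nat_finite[OF \<open>finite J\<close>] by blast
  define g where "g x = (\<lambda>k\<in>?K. f x (h k))" for x
  have "bij_betw g A (Pi\<^sub>E ?K (C \<circ> h))"
    unfolding g_def using bij_betw_trans[OF bij bij_betw_PiE_reindex[OF h]] by (simp add: comp_def)
  moreover have "le x y \<longleftrightarrow> (\<forall>k\<in>?K. (R \<circ> h) k (g x k) (g y k))" if "x \<in> A" "y \<in> A" for x y
  proof -
    have "(\<forall>j\<in>h ` ?K. R j (f x j) (f y j)) \<longleftrightarrow> (\<forall>k\<in>?K. R (h k) (f x (h k)) (f y (h k)))" by blast
    then show ?thesis unfolding le_iff[OF that] g_def bij_betw_imp_surj_on[OF h] by simp
  qed
  moreover have "\<forall>k\<in>?K. chain_on ((C \<circ> h) k) ((R \<circ> h) k)" using chain bij_betwE[OF h] by auto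
  ultimately show ?thesis unfolding iso_product_of_chains_def by blast
qed

lemma distributive_lattice_on_pentagon_collapse:
  assumes dl: "distributive_lattice_on A le"
    and mem: "z \<in> A" "a \<in> A" "b \<in> A" "c \<in> A" "t \<in> A"
    and le: "le z a" "le a b" "le b t" "le z c" "le c t"
    and join_top: "\<And>u. u \<in> A \<Longrightarrow> le a u \<Longrightarrow> le c u \<Longrightarrow> le u t \<Longrightarrow> u = t"
    and meet_bot: "\<And>u. u \<in> A \<Longrightarrow> le u b \<Longrightarrow> le u c \<Longrightarrow> le z u \<Longrightarrow> u = z"
  shows "a = b"
proof -
  have lat: "lattice_on A le" using dl unfolding distributive_lattice_on_def by blast
  then have po: "partial_order_on' A le" unfolding lattice_on_def by blast
  then have refl: "\<And>x. x \<in> A \<Longrightarrow> le x x"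
    and trans: "\<And>x y w. x \<in> A \<Longrightarrow> y \<in> A \<Longrightarrow> w \<in> A \<Longrightarrow> le x y \<Longrightarrow> le y w \<Longrightarrow> le x w"
    unfolding partial_order_on'_def by blast+
  have "is_lub A le a c (join_on A le a c)" using lattice_on_is_lub_join_on[OF lat mem(2,4)] .
  moreover have "le a t" using trans mem le by blast
  ultimately have ac: "join_on A le a c = t" using join_top le mem unfolding is_lub_def by blast
  have "is_glb A le b c (meet_on A le b c)" using lattice_on_is_glb_meet_on[OF lat mem(3,4)] .
  moreover have "le z b" using trans mem le by blast
  ultimately have bc: "meet_on A le b c = z" using meet_bot le mem unfolding is_glb_def by blast
  have "is_glb A le b t b" "is_glb A le b a a" "is_lub A le a z a"
    unfolding is_glb_def is_lub_def using refl mem le by blast+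
  then have bt: "meet_on A le b t = b" and ba: "meet_on A le b a = a" and az: "join_on A le a z = a"
    using meet_on_eqI[OF po] join_on_eqI[OF po] by blast+
  have "meet_on A le b (join_on A le a c) = join_on A le (meet_on A le b a) (meet_on A le b c)"
    using dl mem unfolding distributive_lattice_on_def by blast
  then show "a = b" using ac bc bt ba az by simp
qed

lemma interval_hypergraph_memE:
  assumes "interval_hypergraph n I" "H \<in> I"
  obtains a b where "1 \<le> a" "a \<le> b" "b \<le> n" "H = {a..b}"
  using assms unfolding interval_hypergraph_def by blast

lemma interval_hypergraph_finite: "interval_hypergraph n I \<Longrightarrow> finite I"
  by (rule finite_subset[of _ "Pow {1..n}"]) (auto simp: interval_hypergraph_def)

lemma interval_hypergraph_singleton:
  "interval_hypergraph n I \<Longrightarrow> H \<in> I \<Longrightarrow> v \<in> H \<Longrightarrow> {v} \<in> I"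
  unfolding interval_hypergraph_def by fastforce

lemma orientation_mem: "orientation I Or \<Longrightarrow> H \<in> I \<Longrightarrow> Or H \<in> H"
  unfolding orientation_def by blast

lemma orientation_eqI:
  assumes "orientation I O1" "orientation I O2" "\<And>H. H \<in> I \<Longrightarrow> O1 H = O2 H"
  shows "O1 = O2"
  using assms unfolding orientation_def by (metis ext)

definition orientation_cycle :: "nat set set \<Rightarrow> (nat set \<Rightarrow> nat) \<Rightarrow> nat \<Rightarrow> (nat \<Rightarrow> nat set) \<Rightarrow> bool" where
  "orientation_cycle I Or k Hs \<longleftrightarrow> (\<forall>i<k. Hs i \<in> I \<and> Or (Hs (Suc i mod k)) \<in> Hs i - {Or (Hs i)})"

lemma orientation_cycle_one_based:
  assumes cyc: "orientation_cycle I Or k Hs" and "k \<ge> 1"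
  shows "\<forall>i\<in>{1..k}. Hs (i - 1) \<in> I"
    and "\<forall>i\<in>{1..k-1}. Or (Hs (i + 1 - 1)) \<in> Hs (i - 1) - {Or (Hs (i - 1))}"
    and "Or (Hs (1 - 1)) \<in> Hs (k - 1) - {Or (Hs (k - 1))}"
proof -
  have step: "Hs i \<in> I" "Or (Hs (Suc i mod k)) \<in> Hs i - {Or (Hs i)}" if "i < k" for i
    using cyc that unfolding orientation_cycle_def by blast+
  show "\<forall>i\<in>{1..k}. Hs (i - 1) \<in> I" using step(1) by auto
  show "\<forall>i\<in>{1..k-1}. Or (Hs (i + 1 - 1)) \<in> Hs (i - 1) - {Or (Hs (i - 1))}"
  proof
    fix i assume "i \<in> {1..k-1}"
    then have "i - 1 < k" "Suc (i - 1) mod k = i" by auto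
    then show "Or (Hs (i + 1 - 1)) \<in> Hs (i - 1) - {Or (Hs (i - 1))}" using step(2)[of "i - 1"] by simp
  qed
  show "Or (Hs (1 - 1)) \<in> Hs (k - 1) - {Or (Hs (k - 1))}" using step(2)[of "k - 1"] \<open>k \<ge> 1\<close> by simp
qed

lemma orientation_cycle_of_one_based:
  assumes mem: "\<forall>i\<in>{1..k}. Hs i \<in> I" and step: "\<forall>i\<in>{1..k-1}. Or (Hs (i + 1)) \<in> Hs i - {Or (Hs i)}"
    and close: "Or (Hs 1) \<in> Hs k - {Or (Hs k)}"
  shows "orientation_cycle I Or k (\<lambda>i. Hs (i + 1))"
  unfolding orientation_cycle_def
proof (intro allI impI conjI)
  fix i assume "i < k"
  then show "Hs (i + 1) \<in> I" using mem by simp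
  show "Or (Hs (Suc i mod k + 1)) \<in> Hs (i + 1) - {Or (Hs (i + 1))}"
  proof (cases "Suc i < k")
    case True
    then show ?thesis using step by simp
  next
    case False
    then have "i + 1 = k" using \<open>i < k\<close> by simp
    moreover from this have "Suc i mod k = 0" by simp
    ultimately show ?thesis using close by simp
  qed
qed

lemma acyclic_orientation_iff_no_cycle:
  "acyclic_orientation I Or \<longleftrightarrow> orientation I Or \<and> (\<forall>k\<ge>2. \<forall>Hs. \<not> orientation_cycle I Or k Hs)"
proof -
  have "(\<exists>Hs. orientation_cycle I Or k Hs) \<longleftrightarrow>
        (\<exists>Hs. (\<forall>i\<in>{1..k}. Hs i \<in> I) \<and> (\<forall>i\<in>{1..k-1}. Or (Hs (i + 1)) \<in> Hs i - {Or (Hs i)}) \<and>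
              Or (Hs 1) \<in> Hs k - {Or (Hs k)})" if "k \<ge> 2" for k
  proof
    assume "\<exists>Hs. orientation_cycle I Or k Hs"
    then obtain Hs where "orientation_cycle I Or k Hs" ..
    from orientation_cycle_one_based[OF this] that show "\<exists>Hs. (\<forall>i\<in>{1..k}. Hs i \<in> I) \<and>
        (\<forall>i\<in>{1..k-1}. Or (Hs (i + 1)) \<in> Hs i - {Or (Hs i)}) \<and> Or (Hs 1) \<in> Hs k - {Or (Hs k)}"
      by (intro exI[of _ "\<lambda>i. Hs (i - 1)"]) simp
  next
    assume "\<exists>Hs. (\<forall>i\<in>{1..k}. Hs i \<in> I) \<and> (\<forall>i\<in>{1..k-1}. Or (Hs (i + 1)) \<in> Hs i - {Or (Hs i)}) \<and>
              Or (Hs 1) \<in> Hs k - {Or (Hs k)}"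
    then obtain Hs where "\<forall>i\<in>{1..k}. Hs i \<in> I" "\<forall>i\<in>{1..k-1}. Or (Hs (i + 1)) \<in> Hs i - {Or (Hs i)}"
      "Or (Hs 1) \<in> Hs k - {Or (Hs k)}" by blast
    from orientation_cycle_of_one_based[OF this] show "\<exists>Hs. orientation_cycle I Or k Hs" by blast
  qed
  then show ?thesis unfolding acyclic_orientation_def by (metis (no_types, lifting))
qed

lemma orientation_cycle_rotate:
  assumes "orientation_cycle I Or k Hs"
  shows "orientation_cycle I Or k (\<lambda>i. Hs ((i + r) mod k))"
  unfolding orientation_cycle_def
proof (intro allI impI)
  fix i assume "i < k"
  have "(Suc i mod k + r) mod k = Suc ((i + r) mod k) mod k"
    by (metis add_Suc mod_Suc_eq mod_add_left_eq)
  moreover have "(i + r) mod k < k" using \<open>i < k\<close> by simp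
  ultimately show "Hs ((i + r) mod k) \<in> I \<and>
      Or (Hs ((Suc i mod k + r) mod k)) \<in> Hs ((i + r) mod k) - {Or (Hs ((i + r) mod k))}"
    using assms unfolding orientation_cycle_def by metis
qed

lemma orientation_cycle_two_iff:
  "orientation_cycle I Or 2 Hs \<longleftrightarrow> Hs 0 \<in> I \<and> Hs 1 \<in> I \<and>
     Or (Hs 1) \<in> Hs 0 - {Or (Hs 0)} \<and> Or (Hs 0) \<in> Hs 1 - {Or (Hs 1)}"
  unfolding orientation_cycle_def by (auto simp: less_2_cases_iff)

lemma orientation_cycle_drop_last:
  assumes cyc: "orientation_cycle I Or k g" and k: "k \<ge> 2"
    and closing: "Or (g 0) \<in> g (k - 2) - {Or (g (k - 2))}"
  shows "orientation_cycle I Or (k - 1) g"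
  unfolding orientation_cycle_def
proof (intro allI impI conjI)
  fix i assume "i < k - 1"
  then show "g i \<in> I" using cyc unfolding orientation_cycle_def by simp
  show "Or (g (Suc i mod (k - 1))) \<in> g i - {Or (g i)}"
  proof (cases "Suc i < k - 1")
    case True
    then have "i < k" "Suc i mod (k - 1) = Suc i" "Suc i mod k = Suc i" by simp_all
    then show ?thesis using cyc unfolding orientation_cycle_def by metis
  next
    case False
    then have "Suc i = k - 1" using \<open>i < k - 1\<close> by simp
    then have "i = k - 2" "Suc i mod (k - 1) = 0" using k by simp_all
    then show ?thesis using closing by simp
  qed
qed

lemma orientation_cycle_shorten:
  assumes ih: "interval_hypergraph n I" and ori: "orientation I Or"
    and cyc: "orientation_cycle I Or k g" and k: "k \<ge> 3"
    and top: "\<And>i. i < k \<Longrightarrow> Or (g i) \<le> Or (g (k - 1))"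
  shows "orientation_cycle I Or 2 (\<lambda>i. g (k - 2 + i)) \<or> orientation_cycle I Or (k - 1) g"
proof -
  have step: "g i \<in> I" "Or (g (Suc i mod k)) \<in> g i - {Or (g i)}" if "i < k" for i
    using cyc that unfolding orientation_cycle_def by blast+
  define p q r where "p = g (k - 2)" and "q = g (k - 1)" and "r = g 0"
  have I: "p \<in> I" "q \<in> I" using step(1) k unfolding p_def q_def by auto
  have "Suc (k - 2) mod k = k - 1" "Suc (k - 1) mod k = 0" using k by auto
  then have pq: "Or q \<in> p - {Or p}" and qr: "Or r \<in> q - {Or q}"
    using step(2)[of "k - 2"] step(2)[of "k - 1"] k unfolding p_def q_def r_def by auto
  have le: "Or p \<le> Or q" "Or r \<le> Or q" using top k unfolding p_def q_def r_def by auto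
  have "Or p \<in> p" "Or q \<in> q" using ori I orientation_mem by blast+
  obtain a b where p: "p = {a..b}" using interval_hypergraph_memE[OF ih I(1)] by metis
  obtain a' b' where q: "q = {a'..b'}" using interval_hypergraph_memE[OF ih I(2)] by metis
  show ?thesis
  proof (cases "Or r \<le> Or p")
    case True
    then have "Or p \<in> q - {Or q}" using le pq qr \<open>Or q \<in> q\<close> unfolding q by auto
    moreover have "k - 2 + 1 = k - 1" using k by simp
    ultimately have "orientation_cycle I Or 2 (\<lambda>i. g (k - 2 + i))"
      using I pq unfolding orientation_cycle_two_iff p_def q_def by simp
    then show ?thesis ..
  next
    case False
    then have "Or r \<in> p - {Or p}" using le pq \<open>Or p \<in> p\<close> unfolding p by auto
    then have "orientation_cycle I Or (k - 1) g"
      using orientation_cycle_drop_last[OF cyc] k unfolding p_def r_def by simp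
    then show ?thesis ..
  qed
qed

lemma orientation_cycle_imp_two_cycle:
  assumes ih: "interval_hypergraph n I" and ori: "orientation I Or"
  shows "orientation_cycle I Or k Hs \<Longrightarrow> k \<ge> 2 \<Longrightarrow> \<exists>Hs. orientation_cycle I Or 2 Hs"
proof (induction k arbitrary: Hs rule: less_induct)
  case (less k)
  show ?case
  proof (cases "k = 2")
    case True
    then show ?thesis using less.prems by blast
  next
    case False
    then have k: "k \<ge> 3" using less.prems by simp
    let ?vals = "(\<lambda>i. Or (Hs i)) ` {..<k}"
    have "0 \<in> {..<k}" using k by simp
    then have "Max ?vals \<in> ?vals" by (intro Max_in) blast+
    then obtain m where "m < k" "Or (Hs m) = Max ?vals" by auto
    then have m: "Or (Hs i) \<le> Or (Hs m)" if "i < k" for i using that by simp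
    define g where "g i = Hs ((i + Suc m) mod k)" for i
    have cyc: "orientation_cycle I Or k g"
      unfolding g_def by (rule orientation_cycle_rotate[OF less.prems(1)])
    have "(k - 1 + Suc m) mod k = m" using \<open>m < k\<close> k by simp
    then have "Or (g i) \<le> Or (g (k - 1))" if "i < k" for i
      using m k unfolding g_def by simp
    then consider "orientation_cycle I Or 2 (\<lambda>i. g (k - 2 + i))" | "orientation_cycle I Or (k - 1) g"
      using orientation_cycle_shorten[OF ih ori cyc k] by blast
    then show ?thesis
    proof cases
      case 2
      then show ?thesis using less.IH[of "k - 1" g] k by simp
    qed blast
  qed
qed

lemma acyclic_orientation_iff:
  assumes ih: "interval_hypergraph n I"
  shows "acyclic_orientation I Or \<longleftrightarrow>
    orientation I Or \<and> (\<forall>H\<in>I. \<forall>K\<in>I. Or K \<in> H \<longrightarrow> Or H \<in> K \<longrightarrow> Or H = Or K)"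
proof
  assume ac: "acyclic_orientation I Or"
  have "Or H = Or K" if "H \<in> I" "K \<in> I" "Or K \<in> H" "Or H \<in> K" for H K
  proof (rule ccontr)
    assume "Or H \<noteq> Or K"
    then have "orientation_cycle I Or 2 (\<lambda>i. if i = 0 then H else K)"
      unfolding orientation_cycle_two_iff using that by auto
    then show False using ac unfolding acyclic_orientation_iff_no_cycle by (meson order_refl)
  qed
  then show "orientation I Or \<and> (\<forall>H\<in>I. \<forall>K\<in>I. Or K \<in> H \<longrightarrow> Or H \<in> K \<longrightarrow> Or H = Or K)"
    using ac unfolding acyclic_orientation_def by blast
next
  assume ori: "orientation I Or \<and> (\<forall>H\<in>I. \<forall>K\<in>I. Or K \<in> H \<longrightarrow> Or H \<in> K \<longrightarrow> Or H = Or K)"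
  have "\<not> orientation_cycle I Or 2 Hs" for Hs
    using ori unfolding orientation_cycle_two_iff by blast
  then have "\<not> orientation_cycle I Or k Hs" if "k \<ge> 2" for k Hs
    using orientation_cycle_imp_two_cycle[OF ih, of Or k Hs] ori that by blast
  then show "acyclic_orientation I Or"
    unfolding acyclic_orientation_iff_no_cycle using ori by blast
qed

lemma acyclic_orientation_eq:
  "interval_hypergraph n I \<Longrightarrow> acyclic_orientation I Or \<Longrightarrow> H \<in> I \<Longrightarrow> K \<in> I \<Longrightarrow>
    Or K \<in> H \<Longrightarrow> Or H \<in> K \<Longrightarrow> Or H = Or K"
  unfolding acyclic_orientation_iff by blast

lemma acyclic_orientation_mem: "acyclic_orientation I Or \<Longrightarrow> H \<in> I \<Longrightarrow> Or H \<in> H"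
  unfolding acyclic_orientation_def orientation_def by blast

lemma acyclic_orientation_subset_eq:
  assumes "interval_hypergraph n I" "acyclic_orientation I Or" "H \<in> I" "K \<in> I" "K \<subseteq> H" "Or H \<in> K"
  shows "Or H = Or K"
  using acyclic_orientation_eq[OF assms(1-4)] acyclic_orientation_mem[OF assms(2,4)] assms(5,6) by blast

lemma interval_hypergraph_bounds:
  assumes "interval_hypergraph n I" "{a..b} \<in> I" "a \<le> b"
  shows "1 \<le> a" "b \<le> n"
proof -
  obtain a' b' where "1 \<le> a'" "b' \<le> n" "{a..b} = {a'..b'}"
    using interval_hypergraph_memE[OF assms(1,2)] by metis
  then show "1 \<le> a" "b \<le> n"
    using assms(3) by (metis atLeastAtMost_iff atLeastatMost_subset_iff order_trans subset_refl)+
qed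

lemma increasing_flip_le: "increasing_flip n I O1 O2 \<Longrightarrow> H \<in> I \<Longrightarrow> O1 H \<le> O2 H"
  unfolding increasing_flip_def by (metis less_or_eq_imp_le)

lemma P_le_acyclic: "P_le n I O1 O2 \<Longrightarrow> acyclic_orientation I O1 \<and> acyclic_orientation I O2"
  unfolding P_le_def P_carrier_def by simp

lemma P_le_imp_le:
  assumes "P_le n I O1 O2" "H \<in> I"
  shows "O1 H \<le> O2 H"
proof -
  have "(O1, O2) \<in> (flip_rel n I)\<^sup>*" using assms(1) unfolding P_le_def by blast
  then show ?thesis
  proof (induction rule: rtrancl_induct)
    case (step O2 O3)
    then show ?case using increasing_flip_le[OF _ assms(2)] unfolding flip_rel_def by fastforce
  qed simp
qed

lemma P_le_refl: "acyclic_orientation I Or \<Longrightarrow> P_le n I Or Or"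
  unfolding P_le_def P_carrier_def by simp

lemma P_le_trans: "P_le n I O1 O2 \<Longrightarrow> P_le n I O2 O3 \<Longrightarrow> P_le n I O1 O3"
  unfolding P_le_def by auto

lemma P_le_if_increasing_flip:
  "acyclic_orientation I O1 \<Longrightarrow> acyclic_orientation I O2 \<Longrightarrow> increasing_flip n I O1 O2 \<Longrightarrow> P_le n I O1 O2"
  unfolding P_le_def P_carrier_def flip_rel_def by auto

lemma increasing_flip_intervalI:
  assumes ih: "interval_hypergraph n I" and "O1 \<noteq> O2" "1 \<le> i" "i < j" "j \<le> n"
    and changed: "\<And>s t. {s..t} \<in> I \<Longrightarrow> s \<le> t \<Longrightarrow> O1 {s..t} \<noteq> O2 {s..t} \<Longrightarrow>
      O1 {s..t} = i \<and> O2 {s..t} = j"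
    and covering: "\<And>s t. {s..t} \<in> I \<Longrightarrow> s \<le> i \<Longrightarrow> j \<le> t \<Longrightarrow> O1 {s..t} = i \<longleftrightarrow> O2 {s..t} = j"
  shows "increasing_flip n I O1 O2"
proof -
  have "(O1 H \<noteq> O2 H \<longrightarrow> O1 H = i \<and> O2 H = j) \<and> ({i, j} \<subseteq> H \<longrightarrow> (O1 H = i) = (O2 H = j))"
    if H: "H \<in> I" for H
  proof -
    obtain s t where "s \<le> t" "H = {s..t}" using interval_hypergraph_memE[OF ih H] by metis
    then show ?thesis using changed covering H by auto
  qed
  then show ?thesis unfolding increasing_flip_def using assms(2-5) by blast
qed

definition redirect :: "nat set set \<Rightarrow> (nat set \<Rightarrow> nat) \<Rightarrow> nat \<Rightarrow> nat \<Rightarrow> nat set \<Rightarrow> nat" where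
  "redirect I Or i j K = (if K \<in> I \<and> Or K = i \<and> j \<in> K then j else Or K)"

lemma redirect_orientation: "orientation I Or \<Longrightarrow> orientation I (redirect I Or i j)"
  unfolding orientation_def redirect_def by auto

lemma increasing_flip_redirect:
  assumes "1 \<le> i" "i < j" "j \<le> n" "Or \<noteq> redirect I Or i j"
    and "\<And>K. K \<in> I \<Longrightarrow> i \<in> K \<Longrightarrow> j \<in> K \<Longrightarrow> Or K \<noteq> j"
  shows "increasing_flip n I Or (redirect I Or i j)"
  unfolding increasing_flip_def using assms by (auto simp: redirect_def)

fun first_in :: "nat list \<Rightarrow> nat set \<Rightarrow> nat" where
  "first_in [] H = Min H"
| "first_in (x # xs) H = (if x \<in> H then x else first_in xs H)"

definition list_orientation :: "nat set set \<Rightarrow> nat list \<Rightarrow> nat set \<Rightarrow> nat" where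
  "list_orientation I xs H = (if H \<in> I then first_in xs H else undefined)"

lemma first_in_mem: "finite H \<Longrightarrow> H \<noteq> {} \<Longrightarrow> first_in xs H \<in> H"
  by (induction xs) auto

lemma Min_atLeastAtMost_nat [simp]: "(s::nat) \<le> t \<Longrightarrow> Min {s..t} = s"
  by (simp add: Min_eq_iff)

lemma first_in_eq:
  assumes "finite H" "finite K" "first_in xs H \<in> K" "first_in xs K \<in> H"
  shows "first_in xs H = first_in xs K"
  using assms
proof (induction xs)
  case Nil
  then show ?case by (simp add: Min_le antisym)
qed (auto split: if_splits)

lemma list_orientation_apply: "H \<in> I \<Longrightarrow> list_orientation I xs H = first_in xs H"
  unfolding list_orientation_def by simp

lemma list_orientation_acyclic:
  assumes ih: "interval_hypergraph n I"
  shows "acyclic_orientation I (list_orientation I xs)"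
proof -
  have fin: "finite H" "H \<noteq> {}" if "H \<in> I" for H
    using interval_hypergraph_memE[OF ih that] by (metis atLeastatMost_empty_iff finite_atLeastAtMost not_le)+
  then have "orientation I (list_orientation I xs)"
    unfolding orientation_def list_orientation_def using first_in_mem by simp
  then show ?thesis
    unfolding acyclic_orientation_iff[OF ih] using fin first_in_eq
    by (simp add: list_orientation_apply)
qed

lemma P_le_list_orientations:
  assumes ih: "interval_hypergraph n I" and "1 \<le> i" "i < j" "j \<le> n"
    and changed: "\<And>s t. {s..t} \<in> I \<Longrightarrow> s \<le> t \<Longrightarrow> first_in xs {s..t} \<noteq> first_in ys {s..t} \<Longrightarrow>
      first_in xs {s..t} = i \<and> first_in ys {s..t} = j"
    and covering: "\<And>s t. {s..t} \<in> I \<Longrightarrow> s \<le> i \<Longrightarrow> j \<le> t \<Longrightarrow>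
      first_in xs {s..t} = i \<longleftrightarrow> first_in ys {s..t} = j"
  shows "P_le n I (list_orientation I xs) (list_orientation I ys)"
proof (cases "list_orientation I xs = list_orientation I ys")
  case True
  then show ?thesis using P_le_refl[OF list_orientation_acyclic[OF ih, of xs]] by simp
next
  case False
  have "increasing_flip n I (list_orientation I xs) (list_orientation I ys)"
  proof (rule increasing_flip_intervalI[OF ih False assms(2-4)])
    fix s t assume "{s..t} \<in> I"
    then show "s \<le> t \<Longrightarrow> list_orientation I xs {s..t} \<noteq> list_orientation I ys {s..t} \<Longrightarrow>
        list_orientation I xs {s..t} = i \<and> list_orientation I ys {s..t} = j"
      and "s \<le> i \<Longrightarrow> j \<le> t \<Longrightarrow> list_orientation I xs {s..t} = i \<longleftrightarrow> list_orientation I ys {s..t} = j"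
      unfolding list_orientation_apply[OF \<open>{s..t} \<in> I\<close>] using changed covering by blast+
  qed
  then show ?thesis using P_le_if_increasing_flip list_orientation_acyclic[OF ih] by blast
qed

lemma list_orientation_mem_P_carrier: "interval_hypergraph n I \<Longrightarrow> list_orientation I xs \<in> P_carrier I"
  unfolding P_carrier_def using list_orientation_acyclic by blast

lemma pentagon_top_unique:
  assumes ih: "interval_hypergraph n I" and Y: "{q..r} \<in> I" and pqr: "p < q" "q < r"
    and ac: "acyclic_orientation I Q"
    and lower: "\<And>H. H \<in> I \<Longrightarrow> max (first_in [p, r, q] H) (first_in [q, p, r] H) \<le> Q H"
    and upper: "\<And>H. H \<in> I \<Longrightarrow> Q H \<le> first_in [r, q, p] H"
  shows "Q = list_orientation I [r, q, p]"
proof (rule orientation_eqI)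
  show "orientation I Q" "orientation I (list_orientation I [r, q, p])"
    using ac list_orientation_acyclic[OF ih] unfolding acyclic_orientation_def by blast+
  have QY: "Q {q..r} = r" using lower[OF Y] upper[OF Y] pqr by simp
  fix H assume H: "H \<in> I"
  then obtain s t where st: "s \<le> t" "H = {s..t}" using interval_hypergraph_memE[OF ih] by metis
  show "Q H = list_orientation I [r, q, p] H"
  proof (cases "s \<le> p \<and> r \<le> t")
    case True
    then have "Q H \<in> {q..r}" "Q {q..r} \<in> H" using lower[OF H] upper[OF H] QY pqr st by auto
    then have "Q H = r" using acyclic_orientation_eq[OF ih ac H Y] QY by simp
    then show ?thesis using True pqr st H by (simp add: list_orientation_apply)
  next
    case False
    then show ?thesis using lower[OF H] upper[OF H] pqr st H
      by (auto simp: list_orientation_apply split: if_splits)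
  qed
qed

lemma pentagon_bottom_unique:
  assumes ih: "interval_hypergraph n I" and X: "{p..b} \<in> I" and pqbr: "p < q" "q \<le> b" "b < r"
    and ac: "acyclic_orientation I Q"
    and lower: "\<And>H. H \<in> I \<Longrightarrow> first_in [p, q, r] H \<le> Q H"
    and upper: "\<And>H. H \<in> I \<Longrightarrow> Q H \<le> min (first_in [r, p, q] H) (first_in [q, p, r] H)"
  shows "Q = list_orientation I [p, q, r]"
proof (rule orientation_eqI)
  show "orientation I Q" "orientation I (list_orientation I [p, q, r])"
    using ac list_orientation_acyclic[OF ih] unfolding acyclic_orientation_def by blast+
  have QX: "Q {p..b} = p" using lower[OF X] upper[OF X] pqbr by simp
  fix H assume H: "H \<in> I"
  then obtain s t where st: "s \<le> t" "H = {s..t}" using interval_hypergraph_memE[OF ih] by metis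
  show "Q H = list_orientation I [p, q, r] H"
  proof (cases "s \<le> p \<and> r \<le> t")
    case True
    then have "Q H \<in> {p..b}" "Q {p..b} \<in> H" using lower[OF H] upper[OF H] QX pqbr st by auto
    then have "Q H = p" using acyclic_orientation_eq[OF ih ac H X] QX by simp
    then show ?thesis using True pqbr st H by (simp add: list_orientation_apply)
  next
    case False
    then show ?thesis using lower[OF H] upper[OF H] pqbr st H
      by (auto simp: list_orientation_apply split: if_splits)
  qed
qed

lemma overlap_in_superset_not_distributive:
  assumes ih: "interval_hypergraph n I" and X: "{p..b} \<in> I" and Y: "{q..r} \<in> I" and Z: "Z \<in> I"
    and pqbr: "p < q" "q \<le> b" "b < r" and sub: "{p..r} \<subseteq> Z"
  shows "\<not> distributive_lattice_on (P_carrier I) (P_le n I)"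
proof
  assume dl: "distributive_lattice_on (P_carrier I) (P_le n I)"
  let ?O = "list_orientation I"
  have bounds: "1 \<le> p" "r \<le> n"
    using interval_hypergraph_bounds[OF ih X] interval_hypergraph_bounds[OF ih Y] pqbr by auto
  note flip = P_le_list_orientations[OF ih]
  have f1: "P_le n I (?O [p, q, r]) (?O [p, r, q])"
    by (rule flip[where i=q and j=r]) (use pqbr bounds in \<open>auto split: if_splits\<close>)
  have f2: "P_le n I (?O [p, r, q]) (?O [r, p, q])"
    by (rule flip[where i=p and j=r]) (use pqbr bounds in \<open>auto split: if_splits\<close>)
  have f3: "P_le n I (?O [r, p, q]) (?O [r, q, p])"
    by (rule flip[where i=p and j=q]) (use pqbr bounds in \<open>auto split: if_splits\<close>)
  have f4: "P_le n I (?O [p, q, r]) (?O [q, p, r])"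
    by (rule flip[where i=p and j=q]) (use pqbr bounds in \<open>auto split: if_splits\<close>)
  have f5: "P_le n I (?O [q, p, r]) (?O [r, q, p])"
    by (rule flip[where i=q and j=r]) (use pqbr bounds in \<open>auto split: if_splits\<close>)
  have bound_le: "first_in xs H \<le> Q H" "Q H \<le> first_in ys H"
    if "P_le n I (?O xs) Q" "P_le n I Q (?O ys)" "H \<in> I" for xs ys Q H
    using P_le_imp_le[OF that(1,3)] P_le_imp_le[OF that(2,3)] that(3)
    by (simp_all add: list_orientation_apply)
  have "?O [p, r, q] = ?O [r, p, q]"
  proof (rule distributive_lattice_on_pentagon_collapse
      [where z = "?O [p, q, r]" and c = "?O [q, p, r]" and t = "?O [r, q, p]", OF dl _ _ _ _ _ f1 f2 f3 f4 f5])
    fix Q assume "Q \<in> P_carrier I"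
    show "Q = ?O [r, q, p]"
      if "P_le n I (?O [p, r, q]) Q" "P_le n I (?O [q, p, r]) Q" "P_le n I Q (?O [r, q, p])"
      using pentagon_top_unique[OF ih Y, of p Q] bound_le[OF that(1,3)] bound_le[OF that(2,3)]
        P_le_acyclic[OF that(3)] pqbr by auto
    show "Q = ?O [p, q, r]"
      if "P_le n I Q (?O [r, p, q])" "P_le n I Q (?O [q, p, r])" "P_le n I (?O [p, q, r]) Q"
      using pentagon_bottom_unique[OF ih X pqbr, of Q] bound_le[OF that(3,1)] bound_le[OF that(3,2)]
        P_le_acyclic[OF that(1)] by auto
  qed (rule list_orientation_mem_P_carrier[OF ih])+
  moreover have "first_in [p, r, q] Z \<noteq> first_in [r, p, q] Z" using sub pqbr by auto
  ultimately show False using Z by (metis list_orientation_apply)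
qed

lemma crossing_common_upper_bounds:
  assumes ih: "interval_hypergraph n I" and X: "{a..b} \<in> I" and Y: "{c..d} \<in> I"
    and acbd: "a < c" "c < b" "b < d"
    and minimal: "\<And>s t. {s..t} \<in> I \<Longrightarrow> a < s \<Longrightarrow> s \<le> c \<Longrightarrow> b \<le> t \<Longrightarrow> t < d \<Longrightarrow> False"
  shows "P_le n I (list_orientation I [c, a, b, d]) (list_orientation I [d, c, a, b])"
    and "P_le n I (list_orientation I [c, a, b, d]) (list_orientation I [b, c, a, d])"
    and "P_le n I (list_orientation I [a, b, c, d]) (list_orientation I [d, c, a, b])"
    and "P_le n I (list_orientation I [a, b, c, d]) (list_orientation I [b, c, a, d])"
proof -
  let ?O = "list_orientation I"
  have bounds: "1 \<le> a" "d \<le> n"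
    using interval_hypergraph_bounds[OF ih X] interval_hypergraph_bounds[OF ih Y] acbd by auto
  note flip = P_le_list_orientations[OF ih]
  show "P_le n I (?O [c, a, b, d]) (?O [d, c, a, b])"
  proof (rule P_le_trans)
    show "P_le n I (?O [c, a, b, d]) (?O [c, a, d, b])"
      by (rule flip[where i=b and j=d]) (use acbd bounds in \<open>auto split: if_splits\<close>)
    show "P_le n I (?O [c, a, d, b]) (?O [d, c, a, b])"
      by (rule flip[where i=c and j=d]) (use acbd bounds in \<open>auto split: if_splits\<close>)
  qed
  show "P_le n I (?O [c, a, b, d]) (?O [b, c, a, d])"
    by (rule flip[where i=c and j=b]) (use acbd bounds in \<open>auto split: if_splits\<close>)
  show "P_le n I (?O [a, b, c, d]) (?O [b, c, a, d])"
  proof (rule P_le_trans)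
    show "P_le n I (?O [a, b, c, d]) (?O [b, a, c, d])"
      by (rule flip[where i=a and j=b]) (use acbd bounds in \<open>auto split: if_splits\<close>)
    show "P_le n I (?O [b, a, c, d]) (?O [b, c, a, d])"
      by (rule flip[where i=a and j=c]) (use acbd bounds in \<open>auto split: if_splits\<close>)
  qed
  have "P_le n I (?O [a, d, b, c]) (?O [d, c, a, b])"
  proof (rule P_le_trans)
    show "P_le n I (?O [a, d, b, c]) (?O [d, a, b, c])"
      by (rule flip[where i=a and j=d]) (use acbd bounds in \<open>auto split: if_splits\<close>)
    show "P_le n I (?O [d, a, b, c]) (?O [d, c, a, b])"
      by (rule flip[where i=a and j=c])
        (use acbd bounds in \<open>auto dest: minimal simp: not_le split: if_splits\<close>)
  qed
  moreover have "P_le n I (?O [a, b, c, d]) (?O [a, d, b, c])"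
    by (rule flip[where i=b and j=d]) (use acbd bounds in \<open>auto split: if_splits\<close>)
  ultimately show "P_le n I (?O [a, b, c, d]) (?O [d, c, a, b])" using P_le_trans by blast
qed

lemma minimal_crossing_not_lattice:
  assumes ih: "interval_hypergraph n I" and X: "{a..b} \<in> I" and Y: "{c..d} \<in> I"
    and acbd: "a < c" "c < b" "b < d"
    and minimal: "\<And>s t. {s..t} \<in> I \<Longrightarrow> a < s \<Longrightarrow> s \<le> c \<Longrightarrow> b \<le> t \<Longrightarrow> t < d \<Longrightarrow> False"
  shows "\<not> lattice_on (P_carrier I) (P_le n I)"
proof
  assume "lattice_on (P_carrier I) (P_le n I)"
  let ?O = "list_orientation I"
  obtain S where S: "is_lub (P_carrier I) (P_le n I) (?O [c, a, b, d]) (?O [a, b, c, d]) S"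
    using \<open>lattice_on _ _\<close> list_orientation_mem_P_carrier[OF ih] unfolding lattice_on_def by blast
  then have below: "P_le n I (?O [c, a, b, d]) S" "P_le n I (?O [a, b, c, d]) S"
    and least: "\<And>u. u \<in> P_carrier I \<Longrightarrow> P_le n I (?O [c, a, b, d]) u \<Longrightarrow>
      P_le n I (?O [a, b, c, d]) u \<Longrightarrow> P_le n I S u"
    unfolding is_lub_def by blast+
  note upper = crossing_common_upper_bounds[OF assms]
  have above: "P_le n I S (?O [d, c, a, b])" "P_le n I S (?O [b, c, a, d])"
    using least[OF list_orientation_mem_P_carrier[OF ih] upper(1) upper(3)]
      least[OF list_orientation_mem_P_carrier[OF ih] upper(2) upper(4)] by simp_all
  have SX: "S {a..b} = c"
    using P_le_imp_le[OF below(1) X] P_le_imp_le[OF above(1) X] acbd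
    by (simp add: list_orientation_apply[OF X])
  have SY: "S {c..d} = b"
    using P_le_imp_le[OF below(2) Y] P_le_imp_le[OF above(2) Y] acbd
    by (simp add: list_orientation_apply[OF Y])
  have acS: "acyclic_orientation I S" using P_le_acyclic[OF below(1)] by blast
  have "S {a..b} = S {c..d}"
    by (rule acyclic_orientation_eq[OF ih acS X Y]) (use SX SY acbd in auto)
  then show False using SX SY acbd by simp
qed

lemma crossing_not_lattice:
  assumes ih: "interval_hypergraph n I"
  shows "{a..b} \<in> I \<Longrightarrow> {c..d} \<in> I \<Longrightarrow> a < c \<Longrightarrow> c < b \<Longrightarrow> b < d \<Longrightarrow> {c..b} \<notin> I \<Longrightarrow>
    \<not> lattice_on (P_carrier I) (P_le n I)"
proof (induction "d - a" arbitrary: a b c d rule: less_induct)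
  case less
  show ?case
  proof (cases "\<exists>s t. {s..t} \<in> I \<and> a < s \<and> s \<le> c \<and> b \<le> t \<and> t < d")
    case False
    then show ?thesis using minimal_crossing_not_lattice[OF ih less.prems(1-5)] by blast
  next
    case True
    then obtain s t where st: "{s..t} \<in> I" "a < s" "s \<le> c" "b \<le> t" "t < d" by blast
    consider "s = c" "t = b" | "s = c" "b < t" | "s < c" "{s..b} \<in> I" | "s < c" "{s..b} \<notin> I" "b < t"
      using st by fastforce
    then show ?thesis
    proof cases
      case 1
      then show ?thesis using st less.prems by simp
    next
      case 2
      then show ?thesis using less.hyps[where a = a and b = b and c = c and d = t] st less.prems by simp
    next
      case 3
      then show ?thesis using less.hyps[where a = s and b = b and c = c and d = d] st less.prems by simp
    next
      case 4
      then show ?thesis using less.hyps[where a = a and b = b and c = s and d = t] st less.prems by simp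
    qed
  qed
qed

locale distributive_interval_hypergraph =
  fixes n :: nat and I :: "nat set set"
  assumes interval_hypergraph: "interval_hypergraph n I"
    and crossing_inter_mem: "\<And>a b c d. {a..b} \<in> I \<Longrightarrow> {c..d} \<in> I \<Longrightarrow> a < c \<Longrightarrow> c < b \<Longrightarrow> b < d \<Longrightarrow>
      {c..b} \<in> I"
    and no_overlap_in_superset: "\<And>a b c d Z. {a..b} \<in> I \<Longrightarrow> {c..d} \<in> I \<Longrightarrow> Z \<in> I \<Longrightarrow>
      a < c \<Longrightarrow> c \<le> b \<Longrightarrow> b < d \<Longrightarrow> {a..d} \<subseteq> Z \<Longrightarrow> False"
begin

lemma memE:
  assumes "H \<in> I"
  obtains s t where "1 \<le> s" "s \<le> t" "t \<le> n" "H = {s..t}"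
  using interval_hypergraph_memE[OF interval_hypergraph assms] by metis

lemma finite_mem: "H \<in> I \<Longrightarrow> finite H"
  by (metis memE finite_atLeastAtMost)

lemma nested_in_superset:
  assumes H: "H \<in> I" and K: "K \<in> I" and Z: "Z \<in> I"
    and sub: "H \<subseteq> Z" "K \<subseteq> Z" and meet: "H \<inter> K \<noteq> {}"
  shows "H \<subseteq> K \<or> K \<subseteq> H"
proof (rule ccontr)
  assume not_nested: "\<not> (H \<subseteq> K \<or> K \<subseteq> H)"
  have overlap: False if "{a..b} \<in> I" "{c..d} \<in> I" "a < c" "c \<le> b" "b < d" "{a..b} \<union> {c..d} \<subseteq> Z"
    for a b c d
  proof -
    have "{a..d} \<subseteq> {a..b} \<union> {c..d}" using that(3-5) by auto
    then show False using no_overlap_in_superset[OF that(1,2) Z that(3-5)] that(6) by blast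
  qed
  obtain a b where H': "a \<le> b" "H = {a..b}" using memE[OF H] by metis
  obtain c d where K': "c \<le> d" "K = {c..d}" using memE[OF K] by metis
  obtain x where "x \<in> H \<inter> K" using meet by blast
  then have "(a < c \<and> c \<le> b \<and> b < d) \<or> (c < a \<and> a \<le> d \<and> d < b)"
    using not_nested H' K' by auto
  then show False using overlap H K sub H' K' by (metis sup_commute le_sup_iff)
qed

lemma crossing_inter_mem':
  assumes H: "H \<in> I" and K: "K \<in> I" and "\<not> H \<subseteq> K" "\<not> K \<subseteq> H"
    and uv: "u \<in> H \<inter> K" "v \<in> H \<inter> K" "u \<noteq> v"
  shows "H \<inter> K \<in> I"
proof -
  obtain a b where H': "a \<le> b" "H = {a..b}" using memE[OF H] by metis
  obtain c d where K': "c \<le> d" "K = {c..d}" using memE[OF K] by metis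
  have "(a < c \<and> c < b \<and> b < d) \<or> (c < a \<and> a < d \<and> d < b)"
    using assms H' K' by (auto simp: subset_iff)
  then show ?thesis
  proof
    assume "a < c \<and> c < b \<and> b < d"
    then show ?thesis using crossing_inter_mem[of a b c d] H K H' K' by (simp add: Int_atLeastAtMost)
  next
    assume "c < a \<and> a < d \<and> d < b"
    then show ?thesis using crossing_inter_mem[of c d a b] H K H' K' by (simp add: Int_atLeastAtMost)
  qed
qed

lemma acyclic_if_consistent:
  assumes ori: "orientation I Or"
    and consistent: "\<And>H K. H \<in> I \<Longrightarrow> K \<in> I \<Longrightarrow> K \<subseteq> H \<Longrightarrow> Or H \<in> K \<Longrightarrow> Or H = Or K"
  shows "acyclic_orientation I Or"
  unfolding acyclic_orientation_iff[OF interval_hypergraph]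
proof (intro conjI ori ballI impI)
  fix H K assume HK: "H \<in> I" "K \<in> I" and pointing: "Or K \<in> H" "Or H \<in> K"
  show "Or H = Or K"
  proof (cases "K \<subseteq> H \<or> H \<subseteq> K")
    case True
    then show ?thesis using consistent HK pointing by metis
  next
    case False
    have "Or H \<in> H \<inter> K" "Or K \<in> H \<inter> K" using pointing ori HK orientation_mem by blast+
    show ?thesis
    proof (rule ccontr)
      assume "Or H \<noteq> Or K"
      then have "H \<inter> K \<in> I" using crossing_inter_mem'[OF HK] False \<open>Or H \<in> H \<inter> K\<close> \<open>Or K \<in> H \<inter> K\<close>
        by blast
      then have "Or H = Or (H \<inter> K)" "Or K = Or (H \<inter> K)"
        using consistent HK \<open>Or H \<in> H \<inter> K\<close> \<open>Or K \<in> H \<inter> K\<close> by (metis inf_le1 inf_le2)+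
      then show False using \<open>Or H \<noteq> Or K\<close> by simp
    qed
  qed
qed

definition block :: "nat set \<Rightarrow> nat \<Rightarrow> nat set" where
  "block H v = {v} \<union> \<Union>{K \<in> I. K \<subset> H \<and> v \<in> K}"

definition block_rep :: "nat set \<Rightarrow> nat \<Rightarrow> nat" where
  "block_rep H v = Min (block H v)"

lemma greatest_proper_subedge:
  assumes H: "H \<in> I" and ex: "\<exists>K\<in>I. K \<subset> H \<and> v \<in> K"
  obtains B where "B \<in> I" "B \<subset> H" "v \<in> B" "\<And>K. K \<in> I \<Longrightarrow> K \<subset> H \<Longrightarrow> v \<in> K \<Longrightarrow> K \<subseteq> B"
proof -
  let ?S = "{K \<in> I. K \<subset> H \<and> v \<in> K}"
  have "finite ?S" using interval_hypergraph_finite[OF interval_hypergraph] by simp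
  moreover have "?S \<noteq> {}" using ex by blast
  ultimately obtain B where B: "B \<in> ?S" and B_max: "\<forall>K\<in>?S. B \<subseteq> K \<longrightarrow> B = K"
    using finite_has_maximal by meson
  have below_B: "K \<subseteq> B" if K: "K \<in> ?S" for K
  proof -
    have "K \<subseteq> B \<or> B \<subseteq> K" by (rule nested_in_superset[OF _ _ H]) (use K B in auto)
    then show ?thesis using B_max K by blast
  qed
  show ?thesis
  proof (rule that)
    show "B \<in> I" "B \<subset> H" "v \<in> B" using B by simp_all
  qed (simp add: below_B)
qed

lemma mem_block: "v \<in> block H v"
  unfolding block_def by blast

lemma block_subset: "v \<in> H \<Longrightarrow> block H v \<subseteq> H"
  unfolding block_def by blast

lemma subset_block: "K \<in> I \<Longrightarrow> K \<subset> H \<Longrightarrow> v \<in> K \<Longrightarrow> K \<subseteq> block H v"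
  unfolding block_def by blast

lemma block_mem_psubset:
  assumes H: "H \<in> I" and v: "v \<in> H" and ne: "H \<noteq> {v}"
  shows "block H v \<in> I" "block H v \<subset> H"
proof -
  have "{v} \<in> I" "{v} \<subset> H" using interval_hypergraph_singleton[OF interval_hypergraph H v] v ne by auto
  then obtain B where B: "B \<in> I" "B \<subset> H" "v \<in> B" "\<And>K. K \<in> I \<Longrightarrow> K \<subset> H \<Longrightarrow> v \<in> K \<Longrightarrow> K \<subseteq> B"
    using greatest_proper_subedge[OF H] by blast
  then have "block H v = B" unfolding block_def by blast
  then show "block H v \<in> I" "block H v \<subset> H" using B by simp_all
qed

lemma block_singleton: "block {v} v = {v}"
  unfolding block_def by auto

lemma block_mem:
  assumes "H \<in> I" "v \<in> H"
  shows "block H v \<in> I"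
proof (cases "H = {v}")
  case True
  then show ?thesis using assms block_singleton by simp
qed (use block_mem_psubset assms in blast)

lemma block_eq:
  assumes H: "H \<in> I" and v: "v \<in> H" and w: "w \<in> block H v"
  shows "block H w = block H v"
proof (cases "H = {v}")
  case True
  then show ?thesis using w block_singleton by simp
next
  case False
  have B: "block H v \<in> I" "block H v \<subset> H" using block_mem_psubset[OF H v False] by simp_all
  then have wH: "w \<in> H" and vw: "block H v \<subseteq> block H w" using w subset_block by auto
  then have "H \<noteq> {w}" using B(2) w by auto
  then have "block H w \<in> I" "block H w \<subset> H" using block_mem_psubset[OF H wH] by simp_all
  moreover have "v \<in> block H w" using vw mem_block by blast
  ultimately have "block H w \<subseteq> block H v" by (rule subset_block)
  then show ?thesis using vw by blast
qed

lemma blocks_disjoint: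
  assumes "H \<in> I" "v \<in> H" "w \<in> H" "block H v \<noteq> block H w"
  shows "block H v \<inter> block H w = {}"
  using assms block_eq by blast

lemma block_rep_mem_block: "H \<in> I \<Longrightarrow> v \<in> H \<Longrightarrow> block_rep H v \<in> block H v"
  unfolding block_rep_def using block_mem finite_mem mem_block by (metis Min_in empty_iff)

lemma block_rep_mem: "H \<in> I \<Longrightarrow> v \<in> H \<Longrightarrow> block_rep H v \<in> H"
  using block_rep_mem_block block_subset by blast

lemma block_rep_eq_iff:
  assumes "H \<in> I" "v \<in> H" "w \<in> H"
  shows "block_rep H v = block_rep H w \<longleftrightarrow> block H v = block H w"
  using block_eq[OF assms(1,2) block_rep_mem_block] block_eq[OF assms(1,3) block_rep_mem_block] assms
  unfolding block_rep_def by metis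

lemma block_rep_idem: "H \<in> I \<Longrightarrow> v \<in> H \<Longrightarrow> block_rep H (block_rep H v) = block_rep H v"
  unfolding block_rep_def using block_eq block_rep_mem_block block_rep_def by metis

lemma block_less:
  assumes H: "H \<in> I" and vw: "v \<in> H" "w \<in> H" "v < w" "block H v \<noteq> block H w"
    and mem: "v' \<in> block H v" "w' \<in> block H w"
  shows "v' < w'"
proof -
  obtain a b where v_block: "block H v = {a..b}" using memE[OF block_mem[OF H vw(1)]] by metis
  obtain c d where w_block: "block H w = {c..d}" using memE[OF block_mem[OF H vw(2)]] by metis
  have "b < c"
    using blocks_disjoint[OF H vw(1,2,4)] mem_block[of v H] mem_block[of w H] vw(3) v_block w_block
    by (auto simp: disjoint_iff)
  then show ?thesis using mem v_block w_block by simp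
qed

lemma block_rep_mono:
  assumes H: "H \<in> I" and vw: "v \<in> H" "w \<in> H" "v \<le> w"
  shows "block_rep H v \<le> block_rep H w"
proof (cases "block H v = block H w")
  case False
  then show ?thesis
    using block_less[OF H vw(1,2) _ False block_rep_mem_block block_rep_mem_block] H vw
    by (metis le_less)
qed (simp add: block_rep_def)

lemma block_rep_less_imp_less:
  "H \<in> I \<Longrightarrow> v \<in> H \<Longrightarrow> w \<in> H \<Longrightarrow> block_rep H v < block_rep H w \<Longrightarrow> v < w"
  using block_rep_mono by (meson leD le_less_linear)

lemma le_if_block_rep_le:
  assumes ac1: "acyclic_orientation I O1" and ac2: "acyclic_orientation I O2"
    and rep_le: "\<And>H. H \<in> I \<Longrightarrow> block_rep H (O1 H) \<le> block_rep H (O2 H)"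
  shows "H \<in> I \<Longrightarrow> O1 H \<le> O2 H"
proof (induction "card H" arbitrary: H rule: less_induct)
  case less
  have O1H: "O1 H \<in> H" and O2H: "O2 H \<in> H"
    using acyclic_orientation_mem ac1 ac2 less.prems by blast+
  consider "block_rep H (O1 H) < block_rep H (O2 H)" | "block H (O1 H) = block H (O2 H)"
    using rep_le[OF less.prems] block_rep_eq_iff[OF less.prems O1H O2H] by linarith
  then show ?case
  proof cases
    case 1
    then show ?thesis using block_rep_less_imp_less[OF less.prems O1H O2H 1] by simp
  next
    case 2
    show ?thesis
    proof (cases "H = {O1 H}")
      case True
      then show ?thesis using O2H by (metis order_refl singletonD)
    next
      case False
      let ?B = "block H (O1 H)"
      have B: "?B \<in> I" "?B \<subset> H" using block_mem_psubset[OF less.prems O1H False] by simp_all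
      have "O1 H \<in> ?B" "O2 H \<in> ?B" using mem_block 2 by metis+
      then have "O1 H = O1 ?B" "O2 H = O2 ?B"
        using acyclic_orientation_subset_eq[OF interval_hypergraph _ less.prems B(1)] ac1 ac2 B(2)
        by blast+
      moreover have "O1 ?B \<le> O2 ?B"
        using less.hyps[OF psubset_card_mono[OF finite_mem[OF less.prems] B(2)] B(1)] .
      ultimately show ?thesis by simp
    qed
  qed
qed

lemma redirect_acyclic:
  assumes ac: "acyclic_orientation I Or" and H: "H \<in> I" and i: "Or H = i" and j: "j \<in> H" "i \<noteq> j"
    and cover: "\<And>K. K \<in> I \<Longrightarrow> i \<in> K \<Longrightarrow> j \<in> K \<Longrightarrow> H \<subseteq> K"
    and inner: "\<And>K. K \<in> I \<Longrightarrow> K \<subset> H \<Longrightarrow> j \<in> K \<Longrightarrow> Or K = j"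
  shows "acyclic_orientation I (redirect I Or i j)"
proof (rule acyclic_if_consistent)
  show "orientation I (redirect I Or i j)"
    using ac redirect_orientation unfolding acyclic_orientation_def by blast
  have iH: "i \<in> H" using acyclic_orientation_mem[OF ac H] i by simp
  note subset_eq = acyclic_orientation_subset_eq[OF interval_hypergraph ac]
  fix K K' assume K: "K \<in> I" and K': "K' \<in> I" "K' \<subseteq> K" and points: "redirect I Or i j K \<in> K'"
  show "redirect I Or i j K = redirect I Or i j K'"
  proof (cases "Or K = i \<and> j \<in> K")
    case True
    then have jK': "j \<in> K'" and HK: "H \<subseteq> K"
      using points K cover acyclic_orientation_mem[OF ac K] by (auto simp: redirect_def)
    consider "H \<subseteq> K'" | "K' \<subset> H" | "\<not> H \<subseteq> K'" "\<not> K' \<subseteq> H"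
      by blast
    then show ?thesis
    proof cases
      case 1
      then have "Or K' = i" using subset_eq[OF K K'] True iH by auto
      then show ?thesis using True K K' jK' by (simp add: redirect_def)
    next
      case 2
      then have "Or K' = j" using inner K' jK' by blast
      then show ?thesis using True K K' jK' \<open>i \<noteq> j\<close> by (simp add: redirect_def)
    next
      case 3
      then show ?thesis using nested_in_superset[OF H K'(1) K HK K'(2)] jK' j by blast
    qed
  next
    case False
    then have unchanged: "redirect I Or i j K = Or K" by (auto simp: redirect_def)
    then have "Or K = Or K'" using subset_eq[OF K K'] points by simp
    moreover have "\<not> (Or K' = i \<and> j \<in> K')" using False calculation K'(2) by auto
    ultimately show ?thesis using unchanged unfolding redirect_def by auto
  qed
qed

lemma superset_if_meets_two_blocks:
  assumes H: "H \<in> I" and i: "i \<in> H" and j: "j \<in> H" "j \<notin> block H i"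
    and K: "K \<in> I" "i \<in> K" "j \<in> K"
  shows "H \<subseteq> K"
proof (rule ccontr)
  assume not_sub: "\<not> H \<subseteq> K"
  have "i \<noteq> j" using j(2) mem_block by metis
  have "H \<inter> K \<in> I"
  proof (cases "K \<subseteq> H")
    case True
    then show ?thesis using K(1) by (simp add: Int_absorb1)
  next
    case False
    then show ?thesis using crossing_inter_mem'[OF H K(1) not_sub False, of i j] i j K \<open>i \<noteq> j\<close> by blast
  qed
  moreover have "H \<inter> K \<subset> H" using not_sub by blast
  ultimately have "H \<inter> K \<subseteq> block H i" using subset_block i K(2) by simp
  then show False using j K(3) by blast
qed

lemma flip_target:
  assumes ac1: "acyclic_orientation I O1" and ac2: "acyclic_orientation I O2"
    and le: "\<And>K. K \<in> I \<Longrightarrow> O1 K \<le> O2 K"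
    and H: "H \<in> I" and differ: "O1 H \<noteq> O2 H"
    and agree_below: "\<And>K. K \<in> I \<Longrightarrow> K \<subset> H \<Longrightarrow> O1 K = O2 K"
  obtains j where "O1 H < j" "j \<le> O2 H" "j \<in> H"
    "\<And>K. K \<in> I \<Longrightarrow> O1 H \<in> K \<Longrightarrow> j \<in> K \<Longrightarrow> H \<subseteq> K"
    "\<And>K. K \<in> I \<Longrightarrow> K \<subset> H \<Longrightarrow> j \<in> K \<Longrightarrow> O1 K = j"
proof -
  note subset_eq = acyclic_orientation_subset_eq[OF interval_hypergraph]
  define i where "i = O1 H"
  have iH: "i \<in> H" and o2H: "O2 H \<in> H" using acyclic_orientation_mem ac1 ac2 H i_def by blast+
  have less: "i < O2 H" using le[OF H] differ i_def by simp
  define B where "B = block H i"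
  define D where "D = block H (O2 H)"
  have "H \<noteq> {i}" "H \<noteq> {O2 H}" using iH o2H less by (metis less_irrefl singletonD)+
  then have B: "B \<in> I" "B \<subset> H" and D: "D \<in> I" "D \<subset> H"
    using block_mem_psubset[OF H iH] block_mem_psubset[OF H o2H] B_def D_def by simp_all
  have "O2 H \<notin> B"
  proof
    assume "O2 H \<in> B"
    then have "O2 H = O2 B" using subset_eq[OF ac2 H B(1)] B(2) by blast
    moreover have "O1 H = O1 B" using subset_eq[OF ac1 H B(1)] B(2) mem_block B_def i_def by blast
    ultimately show False using agree_below[OF B] differ by simp
  qed
  then have BD: "B \<noteq> D" using mem_block D_def by metis
  define j where "j = O1 D"
  have jD: "j \<in> D" using acyclic_orientation_mem[OF ac1 D(1)] j_def by simp
  have "O2 H = O2 D" using subset_eq[OF ac2 H D(1)] D(2) mem_block D_def by blast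
  then have j_le: "j \<le> O2 H" using le[OF D(1)] j_def by simp
  have ij: "i < j" using block_less[OF H iH o2H less] BD mem_block jD B_def D_def by blast
  have jB: "j \<notin> B" using blocks_disjoint[OF H iH o2H] BD jD B_def D_def by blast
  show ?thesis
  proof (rule that)
    show "O1 H < j" "j \<le> O2 H" "j \<in> H" using ij j_le jD D(2) i_def by auto
    show "H \<subseteq> K" if "K \<in> I" "O1 H \<in> K" "j \<in> K" for K
      using superset_if_meets_two_blocks[OF H iH _ jB[unfolded B_def]] jD D(2) that i_def by blast
    show "O1 K = j" if K: "K \<in> I" "K \<subset> H" "j \<in> K" for K
    proof -
      have "block H j = D" using block_eq[OF H o2H] jD D_def by simp
      then have "K \<subseteq> D" using subset_block[OF K] by simp
      then show ?thesis using subset_eq[OF ac1 D(1) K(1)] K(3) j_def by simp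
    qed
  qed
qed

lemma redirect_le:
  assumes ac1: "acyclic_orientation I O1" and ac2: "acyclic_orientation I O2" and le: "\<And>K. K \<in> I \<Longrightarrow> O1 K \<le> O2 K"
    and H: "H \<in> I" and i: "O1 H = i" "i \<in> H" and j: "j \<in> H" "j \<le> O2 H"
    and cover: "\<And>K. K \<in> I \<Longrightarrow> i \<in> K \<Longrightarrow> j \<in> K \<Longrightarrow> H \<subseteq> K"
    and K: "K \<in> I"
  shows "redirect I O1 i j K \<le> O2 K"
proof (cases "O1 K = i \<and> j \<in> K")
  case changed: True
  then have HK: "H \<subseteq> K" using cover K acyclic_orientation_mem[OF ac1 K] by simp
  show ?thesis
  proof (cases "O2 K \<in> H")
    case True
    then have "O2 K = O2 H" using acyclic_orientation_subset_eq[OF interval_hypergraph ac2 K H HK] by simp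
    then show ?thesis using j changed K unfolding redirect_def by simp
  next
    case False
    obtain s t where "H = {s..t}" using memE[OF H] by metis
    moreover have "i \<le> O2 K" using le[OF K] changed by simp
    ultimately show ?thesis using False i j changed K unfolding redirect_def by auto
  qed
qed (use le[OF K] in \<open>auto simp: redirect_def\<close>)

lemma exists_increasing_flip_below:
  assumes ac1: "acyclic_orientation I O1" and ac2: "acyclic_orientation I O2"
    and le: "\<And>K. K \<in> I \<Longrightarrow> O1 K \<le> O2 K" and "O1 \<noteq> O2"
  obtains O3 where "acyclic_orientation I O3" "increasing_flip n I O1 O3"
    "\<And>K. K \<in> I \<Longrightarrow> O1 K \<le> O3 K" "\<And>K. K \<in> I \<Longrightarrow> O3 K \<le> O2 K" "\<exists>K\<in>I. O1 K < O3 K"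
proof -
  let ?S = "{H \<in> I. O1 H \<noteq> O2 H}"
  have "orientation I O1" "orientation I O2" using ac1 ac2 unfolding acyclic_orientation_def by blast+
  then have "?S \<noteq> {}" using orientation_eqI[of I O1 O2] \<open>O1 \<noteq> O2\<close> by blast
  moreover have "finite ?S" using interval_hypergraph_finite[OF interval_hypergraph] by simp
  ultimately obtain H where "H \<in> ?S" and H_min: "\<forall>K\<in>?S. K \<subseteq> H \<longrightarrow> H = K"
    using finite_has_minimal by meson
  then have H: "H \<in> I" "O1 H \<noteq> O2 H" by simp_all
  have agree_below: "O1 K = O2 K" if "K \<in> I" "K \<subset> H" for K using H_min that by blast
  obtain j where ij: "O1 H < j" "j \<le> O2 H" "j \<in> H"
    and cover: "\<And>K. K \<in> I \<Longrightarrow> O1 H \<in> K \<Longrightarrow> j \<in> K \<Longrightarrow> H \<subseteq> K"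
    and inner: "\<And>K. K \<in> I \<Longrightarrow> K \<subset> H \<Longrightarrow> j \<in> K \<Longrightarrow> O1 K = j"
    using flip_target[OF ac1 ac2 le H agree_below] by blast
  let ?i = "O1 H"
  have iH: "?i \<in> H" using acyclic_orientation_mem[OF ac1 H(1)] .
  let ?O3 = "redirect I O1 ?i j"
  show ?thesis
  proof (rule that)
    show "acyclic_orientation I ?O3"
      using redirect_acyclic[OF ac1 H(1) refl ij(3) _ cover inner] ij(1) by simp
    have O3H: "?O3 H = j" using H(1) ij(3) by (simp add: redirect_def)
    then show "\<exists>K\<in>I. O1 K < ?O3 K" using H(1) ij(1) by (intro bexI[of _ H]) simp_all
    show "O1 K \<le> ?O3 K" for K using ij(1) by (simp add: redirect_def)
    show "?O3 K \<le> O2 K" if "K \<in> I" for K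
      using redirect_le[OF ac1 ac2 le H(1) refl iH ij(3,2) cover that] .
    have "O1 K \<noteq> j" if "K \<in> I" "?i \<in> K" "j \<in> K" for K
    proof -
      have "H \<subseteq> K" using cover that by blast
      then show ?thesis
        using acyclic_orientation_subset_eq[OF interval_hypergraph ac1 that(1) H(1)] ij(1,3) by fastforce
    qed
    moreover obtain s t where "1 \<le> s" "t \<le> n" "H = {s..t}" using memE[OF H(1)] by metis
    ultimately show "increasing_flip n I O1 ?O3"
      using increasing_flip_redirect[of ?i j n O1 I] iH ij O3H by fastforce
  qed
qed

lemma P_le_if_le:
  assumes ac2: "acyclic_orientation I O2"
  shows "acyclic_orientation I O1 \<Longrightarrow> (\<And>K. K \<in> I \<Longrightarrow> O1 K \<le> O2 K) \<Longrightarrow> P_le n I O1 O2"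
proof (induction "\<Sum>K\<in>I. O2 K - O1 K" arbitrary: O1 rule: less_induct)
  case less
  show ?case
  proof (cases "O1 = O2")
    case True
    then show ?thesis using P_le_refl less.prems by simp
  next
    case False
    then obtain O3 where ac3: "acyclic_orientation I O3" and flip: "increasing_flip n I O1 O3"
      and up: "\<And>K. K \<in> I \<Longrightarrow> O1 K \<le> O3 K" and below: "\<And>K. K \<in> I \<Longrightarrow> O3 K \<le> O2 K"
      and strict: "\<exists>K\<in>I. O1 K < O3 K"
      using exists_increasing_flip_below[OF less.prems(1) ac2 less.prems(2)] by blast
    have "\<exists>K\<in>I. O2 K - O3 K < O2 K - O1 K"
      using strict below by (meson diff_less_mono2 order_less_le_trans)
    then have "(\<Sum>K\<in>I. O2 K - O3 K) < (\<Sum>K\<in>I. O2 K - O1 K)"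
      using interval_hypergraph_finite[OF interval_hypergraph] up
      by (intro sum_strict_mono_ex1) (auto intro: diff_le_mono2)
    then have "P_le n I O3 O2" using less.hyps ac3 below by blast
    then show ?thesis using P_le_trans P_le_if_increasing_flip[OF less.prems(1) ac3 flip] by blast
  qed
qed

function build_orientation :: "(nat set \<Rightarrow> nat) \<Rightarrow> nat set \<Rightarrow> nat" where
  "build_orientation G H =
    (if H \<in> I \<and> G H \<in> H \<and> block H (G H) \<subset> H then build_orientation G (block H (G H)) else G H)"
  by auto
termination
  by (relation "measure (\<lambda>(G, H). card H)") (auto intro: psubset_card_mono finite_mem)

declare build_orientation.simps [simp del]

lemma build_orientation_mem_block:
  assumes G: "\<And>K. K \<in> I \<Longrightarrow> G K \<in> K"
  shows "H \<in> I \<Longrightarrow> build_orientation G H \<in> block H (G H)"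
proof (induction "card H" arbitrary: H rule: less_induct)
  case less
  let ?B = "block H (G H)"
  show ?case
  proof (cases "?B \<subset> H")
    case True
    have B: "?B \<in> I" using block_mem[OF less.prems G[OF less.prems]] .
    have "build_orientation G H = build_orientation G ?B"
      using True less.prems G by (simp add: build_orientation.simps)
    moreover have "build_orientation G ?B \<in> block ?B (G ?B)"
      using less.hyps[OF psubset_card_mono[OF finite_mem[OF less.prems] True] B] .
    ultimately show ?thesis using block_subset[OF G[OF B]] by auto
  next
    case False
    then show ?thesis using mem_block by (simp add: build_orientation.simps)
  qed
qed

lemma build_orientation_consistent:
  assumes G: "\<And>K. K \<in> I \<Longrightarrow> G K \<in> K"
  shows "H \<in> I \<Longrightarrow> K \<in> I \<Longrightarrow> K \<subseteq> H \<Longrightarrow> build_orientation G H \<in> K \<Longrightarrow>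
    build_orientation G H = build_orientation G K"
proof (induction "card H" arbitrary: H rule: less_induct)
  case less
  let ?B = "block H (G H)"
  have H: "H \<in> I" and K: "K \<in> I" "K \<subseteq> H" and points: "build_orientation G H \<in> K" by fact+
  have in_B: "build_orientation G H \<in> ?B" using build_orientation_mem_block[OF G H] .
  show ?case
  proof (cases "K = H")
    case False
    then have KH: "K \<subset> H" using K by blast
    show ?thesis
    proof (cases "?B \<subset> H")
      case True
      have B: "?B \<in> I" using block_mem[OF H G[OF H]] .
      have eq: "build_orientation G H = build_orientation G ?B"
        using True H G by (simp add: build_orientation.simps)
      have "K \<subseteq> block H (build_orientation G H)" using subset_block[OF K(1) KH points] .
      also have "\<dots> = ?B" using block_eq[OF H G[OF H] in_B] .
      finally show ?thesis
        using less.hyps[OF psubset_card_mono[OF finite_mem[OF H] True] B K(1)] eq points by simp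
    next
      case False
      then have "H = {G H}" using block_mem_psubset(2)[OF H G[OF H]] by blast
      then show ?thesis using KH points by (metis empty_iff psubset_eq subset_singleton_iff)
    qed
  qed simp
qed

lemma build_orientation_acyclic:
  assumes G: "\<And>K. K \<in> I \<Longrightarrow> G K \<in> K"
  shows "acyclic_orientation I (\<lambda>K. if K \<in> I then build_orientation G K else undefined)"
proof (rule acyclic_if_consistent)
  show "orientation I (\<lambda>K. if K \<in> I then build_orientation G K else undefined)"
    unfolding orientation_def using build_orientation_mem_block[OF G] block_subset G by auto
qed (use build_orientation_consistent[OF G] in simp)

lemma block_rep_build_orientation:
  assumes G: "\<And>K. K \<in> I \<Longrightarrow> G K \<in> block_rep K ` K" and H: "H \<in> I"
  shows "block_rep H (build_orientation G H) = G H"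
proof -
  have G_mem: "G K \<in> K" if "K \<in> I" for K
    using G[OF that] block_rep_mem[OF that] by (auto simp: image_iff)
  obtain v where v: "G H = block_rep H v" "v \<in> H" using G[OF H] by (rule imageE)
  have "block H (build_orientation G H) = block H (G H)"
    using block_eq[OF H G_mem[OF H] build_orientation_mem_block[OF G_mem H]] .
  then have "block_rep H (build_orientation G H) = block_rep H (G H)" unfolding block_rep_def by simp
  then show ?thesis using block_rep_idem[OF H v(2)] v(1) by simp
qed

lemma P_le_iff_block_rep_le:
  assumes ac1: "acyclic_orientation I O1" and ac2: "acyclic_orientation I O2"
  shows "P_le n I O1 O2 \<longleftrightarrow> (\<forall>H\<in>I. block_rep H (O1 H) \<le> block_rep H (O2 H))"
proof
  assume "P_le n I O1 O2"
  then show "\<forall>H\<in>I. block_rep H (O1 H) \<le> block_rep H (O2 H)"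
    using P_le_imp_le block_rep_mono acyclic_orientation_mem ac1 ac2 by blast
next
  assume "\<forall>H\<in>I. block_rep H (O1 H) \<le> block_rep H (O2 H)"
  then show "P_le n I O1 O2" using P_le_if_le[OF ac2 ac1] le_if_block_rep_le[OF ac1 ac2] by blast
qed

lemma bij_betw_block_reps:
  "bij_betw (\<lambda>Or. \<lambda>H\<in>I. block_rep H (Or H)) (P_carrier I) (Pi\<^sub>E I (\<lambda>H. block_rep H ` H))"
proof (rule bij_betwI')
  fix O1 O2 assume "O1 \<in> P_carrier I" "O2 \<in> P_carrier I"
  then have ac: "acyclic_orientation I O1" "acyclic_orientation I O2" unfolding P_carrier_def by simp_all
  show "(\<lambda>H\<in>I. block_rep H (O1 H)) = (\<lambda>H\<in>I. block_rep H (O2 H)) \<longleftrightarrow> O1 = O2"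
  proof
    assume "(\<lambda>H\<in>I. block_rep H (O1 H)) = (\<lambda>H\<in>I. block_rep H (O2 H))"
    then have "block_rep H (O1 H) = block_rep H (O2 H)" if "H \<in> I" for H
      using that by (metis restrict_apply')
    then have "O1 H = O2 H" if "H \<in> I" for H
      using le_if_block_rep_le[OF ac] le_if_block_rep_le[OF ac(2,1)] that by (simp add: antisym)
    then show "O1 = O2" using orientation_eqI ac unfolding acyclic_orientation_def by blast
  qed simp
next
  fix Or assume "Or \<in> P_carrier I"
  then show "(\<lambda>H\<in>I. block_rep H (Or H)) \<in> Pi\<^sub>E I (\<lambda>H. block_rep H ` H)"
    using acyclic_orientation_mem unfolding P_carrier_def by auto
next
  fix g assume g: "g \<in> Pi\<^sub>E I (\<lambda>H. block_rep H ` H)"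
  then have G: "g K \<in> block_rep K ` K" if "K \<in> I" for K using that by blast
  have G_mem: "g K \<in> K" if "K \<in> I" for K
    using G[OF that] block_rep_mem[OF that] by (auto simp: image_iff)
  let ?Or = "\<lambda>K. if K \<in> I then build_orientation g K else undefined"
  have carrier: "?Or \<in> P_carrier I"
    using build_orientation_acyclic[OF G_mem] unfolding P_carrier_def by simp
  have "g = (\<lambda>H\<in>I. block_rep H (?Or H))"
  proof
    fix H show "g H = (\<lambda>H\<in>I. block_rep H (?Or H)) H"
      using block_rep_build_orientation[OF G] PiE_arb[OF g] by (cases "H \<in> I") simp_all
  qed
  then show "\<exists>Or\<in>P_carrier I. g = (\<lambda>H\<in>I. block_rep H (Or H))" using carrier by (rule bexI)
qed

theorem iso_product_of_chains: "iso_product_of_chains (P_carrier I) (P_le n I)"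
proof (rule iso_product_of_chainsI[OF interval_hypergraph_finite[OF interval_hypergraph]
      chain_on_linorder bij_betw_block_reps])
  fix O1 O2 assume "O1 \<in> P_carrier I" "O2 \<in> P_carrier I"
  then show "P_le n I O1 O2 \<longleftrightarrow> (\<forall>H\<in>I. (\<lambda>H\<in>I. block_rep H (O1 H)) H \<le> (\<lambda>H\<in>I. block_rep H (O2 H)) H)"
    using P_le_iff_block_rep_le unfolding P_carrier_def by simp
qed

end

theorem corollary5p32:
  fixes n :: nat and I :: "nat set set"
  assumes "interval_hypergraph n I"
  shows "distributive_lattice_on (P_carrier I) (P_le n I) \<longleftrightarrow>
         iso_product_of_chains (P_carrier I) (P_le n I)"
proof
  assume dl: "distributive_lattice_on (P_carrier I) (P_le n I)"
  then have lat: "lattice_on (P_carrier I) (P_le n I)" unfolding distributive_lattice_on_def by blast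
  interpret distributive_interval_hypergraph n I
  proof
    show "{c..b} \<in> I" if "{a..b} \<in> I" "{c..d} \<in> I" "a < c" "c < b" "b < d" for a b c d
      using crossing_not_lattice[OF assms that] lat by blast
    show False if "{a..b} \<in> I" "{c..d} \<in> I" "Z \<in> I" "a < c" "c \<le> b" "b < d" "{a..d} \<subseteq> Z"
      for a b c d Z
      using overlap_in_superset_not_distributive[OF assms that] dl by blast
  qed (rule assms)
  show "iso_product_of_chains (P_carrier I) (P_le n I)" by (rule iso_product_of_chains)
next
  assume "iso_product_of_chains (P_carrier I) (P_le n I)"
  then show "distributive_lattice_on (P_carrier I) (P_le n I)"
    by (rule iso_product_of_chains_imp_distributive)
qed

end
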